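(* Let $\Omega\subset\mathbb R^{m+n}$ be a bounded open set with $C^2$ uniformly convex boundary and let $\Gamma\subset\partial\Omega$ be a compact $C^2$ $(m-1)$-dimensional submanifold without boundary. For $q\in\Gamma$ let $\nu(q)$ be the interior unit normal to $\partial\Omega$ at $q$. Then there is $\vartheta\in(0,\frac\pi2)$, depending only on $\Gamma$ and $\Omega$, such that the convex hull of $\Gamma$ satisfies $$\mathrm{ch}(\Gamma)\subset\bigcap_{q\in\Gamma}\big(q+W(T_q\Gamma,\nu(q),\vartheta)\big).$$
   Context: For an $(m-1)$-dimensional linear subspace $V\subset\mathbb R^{m+n}$ let $\mathbf p_V$ be the orthogonal projection onto $V$. For a unit vector $\nu\perp V$ and $\vartheta\in(0,\frac\pi2)$, the wedge with spine $V$, axis $\nu$ and opening angle $\vartheta$ is $W(V,\nu,\vartheta)=\{y:\ |y-\mathbf p_V(y)-(y\cdot\nu)\nu|\le(\tan\vartheta)\,y\cdot\nu\}$. $T_q\Gamma$ denotes the tangent space of $\Gamma$ at $q$ (viewed as a linear subspace). *)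

theory Defs
  imports "HOL-Analysis.Analysis"
begin

definition C2_on :: "'a::euclidean_space set \<Rightarrow> ('a \<Rightarrow> 'b::euclidean_space) \<Rightarrow> bool" where
  "C2_on U f \<longleftrightarrow>
     (\<exists>(Df :: 'a \<Rightarrow> 'a \<Rightarrow>\<^sub>L 'b) (D2f :: 'a \<Rightarrow> 'a \<Rightarrow>\<^sub>L ('a \<Rightarrow>\<^sub>L 'b)).
        (\<forall>x\<in>U. (f has_derivative blinfun_apply (Df x)) (at x)) \<and>
        (\<forall>x\<in>U. (Df has_derivative blinfun_apply (D2f x)) (at x)) \<and>
        continuous_on U D2f)"

text \<open>Embedded C^2 submanifold (without boundary) of dimension k: locally the zero
  set of a C^2 submersion onto a (DIM - k)-dimensional linear space.\<close>
definition C2_submanifold :: "'a::euclidean_space set \<Rightarrow> nat \<Rightarrow> bool" where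
  "C2_submanifold M k \<longleftrightarrow> k \<le> DIM('a) \<and>
     (\<forall>p\<in>M. \<exists>U (F :: 'a \<Rightarrow> 'a) S.
        open U \<and> p \<in> U \<and> subspace S \<and> dim S = DIM('a) - k \<and>
        C2_on U F \<and> (\<forall>x\<in>U. F x \<in> S) \<and>
        (\<forall>x\<in>U. range (frechet_derivative F (at x)) = S) \<and>
        M \<inter> U = {x\<in>U. F x = 0})"

definition tangent_space :: "'a::euclidean_space set \<Rightarrow> 'a \<Rightarrow> 'a set" where
  "tangent_space M q = {v. \<exists>\<gamma> :: real \<Rightarrow> 'a. \<gamma> 0 = q \<and> (\<gamma> has_vector_derivative v) (at 0) \<and>
        (\<exists>\<epsilon>>0. \<forall>t. \<bar>t\<bar> < \<epsilon> \<longrightarrow> \<gamma> t \<in> M)}"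

text \<open>Bounded open convex domain with C^2 uniformly convex boundary: defining function
  rho near the boundary, nonvanishing gradient on the boundary, and Hessian on tangent
  vectors bounded below by kappa |grad rho| |v|^2 (principal curvatures >= kappa > 0).\<close>
definition C2_uniformly_convex_domain :: "'a::euclidean_space set \<Rightarrow> bool" where
  "C2_uniformly_convex_domain \<Omega> \<longleftrightarrow> convex \<Omega> \<and>
     (\<exists>U (\<rho> :: 'a \<Rightarrow> real) (D\<rho> :: 'a \<Rightarrow> 'a \<Rightarrow>\<^sub>L real) (D2\<rho> :: 'a \<Rightarrow> 'a \<Rightarrow>\<^sub>L ('a \<Rightarrow>\<^sub>L real)) \<kappa>.
        open U \<and> frontier \<Omega> \<subseteq> U \<and>
        (\<forall>x\<in>U. (\<rho> has_derivative blinfun_apply (D\<rho> x)) (at x)) \<and>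
        (\<forall>x\<in>U. (D\<rho> has_derivative blinfun_apply (D2\<rho> x)) (at x)) \<and>
        continuous_on U D2\<rho> \<and>
        \<Omega> \<inter> U = {x\<in>U. \<rho> x < 0} \<and>
        (\<forall>x\<in>frontier \<Omega>. D\<rho> x \<noteq> 0) \<and>
        \<kappa> > 0 \<and>
        (\<forall>x\<in>frontier \<Omega>. \<forall>v. D\<rho> x v = 0 \<longrightarrow>
            D2\<rho> x v v \<ge> \<kappa> * norm (D\<rho> x) * (norm v)\<^sup>2))"

definition interior_normal :: "'a::euclidean_space set \<Rightarrow> 'a \<Rightarrow> 'a" where
  "interior_normal \<Omega> q = (THE \<nu>. norm \<nu> = 1 \<and>
      (\<forall>v\<in>tangent_space (frontier \<Omega>) q. \<nu> \<bullet> v = 0) \<and>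
      (\<exists>\<epsilon>>0. \<forall>t. 0 < t \<and> t < \<epsilon> \<longrightarrow> q + t *\<^sub>R \<nu> \<in> \<Omega>))"

definition orth_proj :: "'a::euclidean_space set \<Rightarrow> 'a \<Rightarrow> 'a" where
  "orth_proj V y = (THE v. v \<in> V \<and> (\<forall>w\<in>V. (y - v) \<bullet> w = 0))"

definition wedge :: "'a::euclidean_space set \<Rightarrow> 'a \<Rightarrow> real \<Rightarrow> 'a set" where
  "wedge V \<nu> \<theta> = {y. norm (y - orth_proj V y - (y \<bullet> \<nu>) *\<^sub>R \<nu>) \<le> tan \<theta> * (y \<bullet> \<nu>)}"

end

theory Submission
  imports Defs
begin

lemma orth_proj_unique:
  fixes V :: "'a::euclidean_space set"
  assumes "subspace V" and "v \<in> V" and "v' \<in> V"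
    and "\<forall>w\<in>V. (y - v) \<bullet> w = 0" and "\<forall>w\<in>V. (y - v') \<bullet> w = 0"
  shows "v = v'"
proof -
  have "v - v' \<in> V" using assms by (simp add: subspace_diff)
  then have "(y - v') \<bullet> (v - v') - (y - v) \<bullet> (v - v') = 0" using assms by simp
  then have "(v - v') \<bullet> (v - v') = 0" by (simp add: inner_diff_left)
  then show ?thesis by simp
qed

lemma orth_proj:
  fixes V :: "'a::euclidean_space set"
  assumes V: "subspace V"
  shows "orth_proj V y \<in> V" and "\<forall>w\<in>V. (y - orth_proj V y) \<bullet> w = 0"
proof -
  obtain a z where a: "a \<in> span V" and z: "\<And>w. w \<in> span V \<Longrightarrow> orthogonal z w" and y: "y = a + z"
    using orthogonal_subspace_decomp_exists[of V y] by blast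
  have "a \<in> V" using a V by (metis span_eq_iff)
  moreover have "\<forall>w\<in>V. (y - a) \<bullet> w = 0" using z y by (simp add: orthogonal_def span_base)
  ultimately have a_spec: "a \<in> V \<and> (\<forall>w\<in>V. (y - a) \<bullet> w = 0)" by blast
  then have "orth_proj V y \<in> V \<and> (\<forall>w\<in>V. (y - orth_proj V y) \<bullet> w = 0)"
    unfolding orth_proj_def by (rule theI) (use orth_proj_unique[OF V, of _ a y] a_spec in blast)
  then show "orth_proj V y \<in> V" and "\<forall>w\<in>V. (y - orth_proj V y) \<bullet> w = 0" by auto
qed

lemma orth_proj_eqI:
  fixes V :: "'a::euclidean_space set"
  assumes "subspace V" and "v \<in> V" and "\<forall>w\<in>V. (y - v) \<bullet> w = 0"
  shows "orth_proj V y = v"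
  by (rule orth_proj_unique[OF assms(1) orth_proj(1)[OF assms(1)] assms(2) orth_proj(2)[OF assms(1)] assms(3)])

lemma orth_proj_nearest:
  fixes V :: "'a::euclidean_space set"
  assumes V: "subspace V" and k: "k \<in> V"
  shows "norm (y - orth_proj V y) \<le> norm (y - k)"
proof -
  let ?P = "orth_proj V y"
  have "?P - k \<in> V" using orth_proj(1)[OF V] k V by (simp add: subspace_diff)
  then have "orthogonal (y - ?P) (?P - k)" using orth_proj(2)[OF V] by (simp add: orthogonal_def)
  then have "(norm (y - k))\<^sup>2 = (norm (y - ?P))\<^sup>2 + (norm (?P - k))\<^sup>2"
    using norm_add_Pythagorean[of "y - ?P" "?P - k"] by simp
  then have "(norm (y - ?P))\<^sup>2 \<le> (norm (y - k))\<^sup>2" by simp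
  then show ?thesis by (simp add: power2_le_iff_abs_le)
qed

lemma linear_orth_proj:
  fixes V :: "'a::euclidean_space set"
  assumes V: "subspace V"
  shows "linear (orth_proj V)"
proof
  fix x y :: 'a and a :: real
  note P = orth_proj[OF V]
  show "orth_proj V (x + y) = orth_proj V x + orth_proj V y"
    using P[of x] P[of y]
    by (intro orth_proj_eqI[OF V]) (auto simp: subspace_add[OF V] inner_diff_left inner_add_left)
  show "orth_proj V (a *\<^sub>R x) = a *\<^sub>R orth_proj V x"
    using P[of x]
    by (intro orth_proj_eqI[OF V]) (auto simp: subspace_scale[OF V] inner_diff_left)
qed

definition off_axis_part :: "'a::euclidean_space set \<Rightarrow> 'a \<Rightarrow> 'a \<Rightarrow> 'a" where
  "off_axis_part V \<nu> y = y - orth_proj V y - (y \<bullet> \<nu>) *\<^sub>R \<nu>"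

lemma mem_wedge_iff: "y \<in> wedge V \<nu> \<theta> \<longleftrightarrow> norm (off_axis_part V \<nu> y) \<le> tan \<theta> * (y \<bullet> \<nu>)"
  by (simp add: wedge_def off_axis_part_def)

lemma linear_off_axis_part:
  fixes V :: "'a::euclidean_space set"
  assumes "subspace V"
  shows "linear (off_axis_part V \<nu>)"
proof -
  have "linear (\<lambda>y. (y \<bullet> \<nu>) *\<^sub>R \<nu>)"
    by (rule bounded_linear.linear) (intro bounded_linear_intros)
  then show ?thesis unfolding off_axis_part_def
    by (intro linear_compose_sub linear_ident linear_orth_proj[OF assms])
qed

lemma convex_wedge:
  fixes V :: "'a::euclidean_space set"
  assumes V: "subspace V"
  shows "convex (wedge V \<nu> \<theta>)"
proof (rule convexI)
  fix x y and u v :: real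
  assume "x \<in> wedge V \<nu> \<theta>" "y \<in> wedge V \<nu> \<theta>" and uv: "0 \<le> u" "0 \<le> v" "u + v = 1"
  then have x: "norm (off_axis_part V \<nu> x) \<le> tan \<theta> * (x \<bullet> \<nu>)"
    and y: "norm (off_axis_part V \<nu> y) \<le> tan \<theta> * (y \<bullet> \<nu>)" by (simp_all add: mem_wedge_iff)
  have lin: "linear (off_axis_part V \<nu>)" by (rule linear_off_axis_part[OF V])
  have "norm (off_axis_part V \<nu> (u *\<^sub>R x + v *\<^sub>R y))
      \<le> u * norm (off_axis_part V \<nu> x) + v * norm (off_axis_part V \<nu> y)"
    using uv norm_triangle_ineq[of "u *\<^sub>R off_axis_part V \<nu> x" "v *\<^sub>R off_axis_part V \<nu> y"]
    by (simp add: linear_add[OF lin] linear_scale[OF lin])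
  also have "\<dots> \<le> u * (tan \<theta> * (x \<bullet> \<nu>)) + v * (tan \<theta> * (y \<bullet> \<nu>))"
    using uv x y by (intro add_mono mult_left_mono)
  also have "\<dots> = tan \<theta> * ((u *\<^sub>R x + v *\<^sub>R y) \<bullet> \<nu>)" by (simp add: algebra_simps inner_add_left)
  finally show "u *\<^sub>R x + v *\<^sub>R y \<in> wedge V \<nu> \<theta>" by (simp add: mem_wedge_iff)
qed

lemma convex_hull_subset_translated_wedge:
  fixes V :: "'a::euclidean_space set"
  assumes "subspace V" and "\<And>x. x \<in> S \<Longrightarrow> x - q \<in> wedge V \<nu> \<theta>"
  shows "convex hull S \<subseteq> (\<lambda>y. q + y) ` wedge V \<nu> \<theta>"
proof (rule hull_minimal)
  show "S \<subseteq> (\<lambda>y. q + y) ` wedge V \<nu> \<theta>"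
  proof
    fix x assume "x \<in> S"
    then show "x \<in> (\<lambda>y. q + y) ` wedge V \<nu> \<theta>" using assms(2) by (intro image_eqI[of _ _ "x - q"]) auto
  qed
  show "convex ((\<lambda>y. q + y) ` wedge V \<nu> \<theta>)"
    using convex_translation[OF convex_wedge[OF assms(1)]] by simp
qed

lemma norm_off_axis_part_le:
  fixes V :: "'a::euclidean_space set"
  assumes V: "subspace V" and \<nu>: "norm \<nu> = 1" and perp: "\<And>v. v \<in> V \<Longrightarrow> \<nu> \<bullet> v = 0"
  shows "norm (off_axis_part V \<nu> y) \<le> norm (y - orth_proj V y)"
proof -
  define z where "z = y - orth_proj V y"
  define t where "t = z \<bullet> \<nu>"
  have "\<nu> \<bullet> orth_proj V y = 0" using orth_proj(1)[OF V] by (rule perp)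
  then have zt: "t = y \<bullet> \<nu>" by (simp add: t_def z_def inner_diff_left inner_commute[of \<nu>])
  have "orthogonal (z - t *\<^sub>R \<nu>) (t *\<^sub>R \<nu>)"
    using \<nu> by (simp add: orthogonal_def t_def inner_diff_left dot_square_norm)
  then have "(norm z)\<^sup>2 = (norm (z - t *\<^sub>R \<nu>))\<^sup>2 + (norm (t *\<^sub>R \<nu>))\<^sup>2"
    using norm_add_Pythagorean[of "z - t *\<^sub>R \<nu>" "t *\<^sub>R \<nu>"] by simp
  then have "(norm (z - t *\<^sub>R \<nu>))\<^sup>2 \<le> (norm z)\<^sup>2" by simp
  then have "norm (z - t *\<^sub>R \<nu>) \<le> norm z" by (simp add: power2_le_iff_abs_le)
  then show ?thesis by (simp add: off_axis_part_def z_def zt)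
qed


lemma linear_right_inverse_on_kernel_complement:
  fixes f :: "'a::euclidean_space \<Rightarrow> 'b::euclidean_space"
  assumes f: "linear f"
  obtains c g where "c > 0" and "linear g" and "\<And>y. norm (g y) \<le> c * norm y"
    and "\<And>y. g y \<in> orthogonal_comp (f -` {0})"
    and "\<And>w. w \<in> orthogonal_comp (f -` {0}) \<Longrightarrow> g (f w) = w"
    and "\<And>y. y \<in> range f \<Longrightarrow> f (g y) = y"
proof -
  let ?K = "f -` {0}" let ?W = "orthogonal_comp ?K"
  have sK: "subspace ?K" using f by (auto simp: subspace_def linear_0 linear_add linear_scale)
  have spW: "span ?W = ?W" by (simp add: subspace_orthogonal_comp)
  have complement: "x - orth_proj ?K x \<in> ?W \<and> f (x - orth_proj ?K x) = f x" for x
    using orth_proj[OF sK, of x] f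
    by (auto simp: orthogonal_comp_def orthogonal_def inner_commute linear_diff)
  have "inj_on f ?W"
  proof (rule inj_onI)
    fix x y assume "x \<in> ?W" "y \<in> ?W" "f x = f y"
    then have "x - y \<in> ?K \<inter> ?W" using f by (auto simp: linear_diff subspace_diff subspace_orthogonal_comp)
    then show "x = y" using orthogonal_Int_0[OF sK] by auto
  qed
  then obtain g where g: "range g \<subseteq> ?W" "linear g" "\<forall>x\<in>?W. g (f x) = x"
    using linear_inj_on_left_inverse[OF f] spW by metis
  obtain c where c: "c > 0" "\<And>y. norm (g y) \<le> c * norm y"
    using linear_bounded_pos[OF g(2)] by blast
  have "f (g y) = y" if "y \<in> range f" for y
    using that complement g(3) by (metis imageE)
  then show ?thesis using that[OF c(1) g(2) c(2)] g by blast
qed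

lemma norm_linearization_error_le:
  fixes F :: "'a::euclidean_space \<Rightarrow> 'b::euclidean_space"
  assumes S: "convex S"
    and der: "\<And>z. z \<in> S \<Longrightarrow> (F has_derivative blinfun_apply (Df z)) (at z)"
    and B: "\<And>z. z \<in> S \<Longrightarrow> norm (Df z - L) \<le> B"
    and x: "x \<in> S" and y: "y \<in> S"
  shows "norm (F x - F y - L (x - y)) \<le> B * norm (x - y)"
proof -
  define G where "G z = F z - L z" for z
  have dG: "(G has_derivative blinfun_apply (Df z - L)) (at z within S)" if "z \<in> S" for z
  proof -
    have "(G has_derivative (\<lambda>h. Df z h - L h)) (at z)"
      unfolding G_def by (intro has_derivative_diff der that bounded_linear_imp_has_derivative
        blinfun.bounded_linear_right)
    moreover have "blinfun_apply (Df z - L) = (\<lambda>h. Df z h - L h)"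
      by (rule ext) (simp add: blinfun.diff_left)
    ultimately show ?thesis by (simp add: has_derivative_at_withinI)
  qed
  have "norm (G x - G y) \<le> B * norm (x - y)"
    by (rule differentiable_bound[OF S dG _ x y]) (use B in \<open>simp_all add: norm_blinfun.rep_eq[symmetric]\<close>)
  then show ?thesis by (simp add: G_def blinfun.diff_right algebra_simps)
qed

lemma lipschitz_bound_by_derivative:
  fixes Df :: "'a::euclidean_space \<Rightarrow> 'a \<Rightarrow>\<^sub>L 'b::euclidean_space"
  assumes S: "convex S"
    and der: "\<And>z. z \<in> S \<Longrightarrow> (Df has_derivative blinfun_apply (D2f z)) (at z)"
    and B: "\<And>z. z \<in> S \<Longrightarrow> norm (D2f z) \<le> M"
    and x: "x \<in> S" and y: "y \<in> S"
  shows "norm (Df x - Df y) \<le> M * norm (x - y)"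
  by (rule differentiable_bound[OF S _ _ x y, where f'="\<lambda>z. blinfun_apply (D2f z)"])
    (use der B in \<open>auto simp add: norm_blinfun.rep_eq[symmetric] has_derivative_at_withinI\<close>)

lemma abs_blinfun_bilinear_le:
  fixes X :: "'a::real_normed_vector \<Rightarrow>\<^sub>L ('b::real_normed_vector \<Rightarrow>\<^sub>L real)"
  shows "\<bar>X a b\<bar> \<le> norm X * norm a * norm b"
proof -
  have "\<bar>X a b\<bar> \<le> norm (blinfun_apply X a) * norm b" using norm_blinfun[of "X a" b] by simp
  also have "\<dots> \<le> norm X * norm a * norm b" by (intro mult_right_mono norm_blinfun) simp
  finally show ?thesis .
qed

lemma contraction_fixpoint_in_subspace:
  fixes T :: "'a::euclidean_space \<Rightarrow> 'a"
  assumes W: "subspace W" and maps: "\<And>w. w \<in> W \<Longrightarrow> T w \<in> W"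
    and contr: "\<And>w w'. w \<in> W \<Longrightarrow> w' \<in> W \<Longrightarrow> norm w \<le> r \<Longrightarrow> norm w' \<le> r \<Longrightarrow>
      norm (T w - T w') \<le> norm (w - w') / 2"
    and T0: "norm (T 0) \<le> r / 2"
  obtains w where "w \<in> W" and "norm w \<le> r" and "T w = w"
proof -
  define S where "S = W \<inter> cball 0 r"
  have r: "0 \<le> r" using T0 norm_ge_zero[of "T 0"] by linarith
  then have S0: "0 \<in> S" using W by (simp add: S_def subspace_0)
  have "T ` S \<subseteq> S"
  proof clarify
    fix w assume w: "w \<in> S"
    have "norm (T w) \<le> norm (T w - T 0) + norm (T 0)" using norm_triangle_sub[of "T w" "T 0"] by simp
    also have "\<dots> \<le> norm w / 2 + r / 2" using contr[of w 0] w W T0 r by (simp add: S_def subspace_0)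
    also have "\<dots> \<le> r" using w by (simp add: S_def)
    finally show "T w \<in> S" using maps w by (simp add: S_def)
  qed
  moreover have "complete S"
    unfolding complete_eq_closed S_def by (intro closed_Int closed_subspace W closed_cball)
  ultimately have "\<exists>!w\<in>S. T w = w"
    by (intro Banach_fix[of S "1/2"]) (use S0 contr in \<open>auto simp: S_def dist_norm\<close>)
  then show ?thesis using that by (auto simp: S_def)
qed

lemma has_derivative_zero_if_dominated:
  fixes w :: "real \<Rightarrow> 'a::real_normed_vector" and \<phi> :: "real \<Rightarrow> 'b::real_normed_vector"
  assumes \<phi>: "(\<phi> has_derivative (\<lambda>_. 0)) (at 0)" and "\<phi> 0 = 0" and "w 0 = 0"
    and dom: "\<forall>\<^sub>F t in at 0. norm (w t) \<le> C * norm (\<phi> t)"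
  shows "(w has_derivative (\<lambda>_. 0)) (at 0)"
  unfolding has_derivative_iff_norm
proof (intro conjI bounded_linear_zero)
  have "((\<lambda>t. norm (\<phi> t - \<phi> 0 - 0) / norm (t - 0)) \<longlongrightarrow> 0) (at 0)"
    using \<phi> unfolding has_derivative_iff_norm by simp
  then have "((\<lambda>t. C * (norm (\<phi> t - \<phi> 0 - 0) / norm (t - 0))) \<longlongrightarrow> C * 0) (at 0)"
    by (intro tendsto_mult tendsto_const)
  then have "((\<lambda>t. C * (norm (\<phi> t - \<phi> 0 - 0) / norm (t - 0))) \<longlongrightarrow> 0) (at 0)"
    by (simp only: mult_zero_right)
  moreover have "\<forall>\<^sub>F t in at 0. norm (norm (w t - w 0 - 0) / norm (t - 0)) \<le> C * (norm (\<phi> t - \<phi> 0 - 0) / norm (t - 0))"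
    using dom by eventually_elim (use assms in \<open>simp add: divide_right_mono\<close>)
  ultimately show "((\<lambda>t. norm (w t - w 0 - 0) / norm (t - 0)) \<longlongrightarrow> 0) (at 0)"
    by (rule Lim_null_comparison[rotated])
qed

lemma has_real_derivative_along_line:
  fixes f :: "'a::real_normed_vector \<Rightarrow> real"
  assumes "(f has_derivative A) (at (q + t *\<^sub>R h))" and "linear A"
  shows "((\<lambda>s. f (q + s *\<^sub>R h)) has_real_derivative A h) (at t)"
proof -
  have "((\<lambda>s. q + s *\<^sub>R h) has_derivative (\<lambda>s. s *\<^sub>R h)) (at t)" by (auto intro!: derivative_eq_intros)
  then have "((\<lambda>s. f (q + s *\<^sub>R h)) has_derivative (\<lambda>s. A (s *\<^sub>R h))) (at t)"
    using assms(1) by (rule has_derivative_compose)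
  moreover have "(\<lambda>s. A (s *\<^sub>R h)) = (*) (A h)" using assms(2) by (auto simp: linear_scale)
  ultimately show ?thesis by (simp add: has_field_derivative_def)
qed

lemma taylor_second_order:
  fixes \<rho> :: "'a::euclidean_space \<Rightarrow> real"
  assumes d1: "\<And>z. z \<in> closed_segment q x \<Longrightarrow> (\<rho> has_derivative blinfun_apply (D\<rho> z)) (at z)"
    and d2: "\<And>z. z \<in> closed_segment q x \<Longrightarrow> (D\<rho> has_derivative blinfun_apply (D2\<rho> z)) (at z)"
  shows "\<exists>t. 0 \<le> t \<and> t \<le> 1 \<and> \<rho> x = \<rho> q + D\<rho> q (x - q) + (1/2) * D2\<rho> (q + t *\<^sub>R (x - q)) (x - q) (x - q)"
proof -
  define h where "h = x - q"
  define diff where "diff m t = (if m = 0 then \<rho> (q + t *\<^sub>R h) else if m = 1 then D\<rho> (q + t *\<^sub>R h) h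
    else D2\<rho> (q + t *\<^sub>R h) h h)" for m :: nat and t :: real
  have "DERIV (diff m) t :> diff (Suc m) t" if "m < 2" "0 \<le> t" "t \<le> 1" for m t
  proof -
    have "q + t *\<^sub>R h = (1 - t) *\<^sub>R q + t *\<^sub>R x" by (simp add: h_def algebra_simps)
    then have seg: "q + t *\<^sub>R h \<in> closed_segment q x" unfolding closed_segment_def using that by blast
    have "((\<lambda>z. D\<rho> z h) has_derivative (\<lambda>k. D2\<rho> (q + t *\<^sub>R h) k h)) (at (q + t *\<^sub>R h))"
      using has_derivative_compose[OF d2[OF seg] blinfun.bounded_linear_left[THEN bounded_linear_imp_has_derivative]] .
    moreover have "linear (\<lambda>k. D2\<rho> (q + t *\<^sub>R h) k h)"
      by (simp add: linear_iff blinfun.add_right blinfun.add_left blinfun.scaleR_right blinfun.scaleR_left)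
    ultimately have "DERIV (\<lambda>s. D\<rho> (q + s *\<^sub>R h) h) t :> D2\<rho> (q + t *\<^sub>R h) h h"
      by (rule has_real_derivative_along_line)
    moreover have "DERIV (\<lambda>s. \<rho> (q + s *\<^sub>R h)) t :> D\<rho> (q + t *\<^sub>R h) h"
      using d1[OF seg] by (rule has_real_derivative_along_line)
        (simp add: blinfun.bounded_linear_right bounded_linear.linear)
    moreover have "diff 0 = (\<lambda>s. \<rho> (q + s *\<^sub>R h))" "diff 1 = (\<lambda>s. D\<rho> (q + s *\<^sub>R h) h)"
      by (simp_all add: diff_def fun_eq_iff)
    ultimately show ?thesis using \<open>m < 2\<close> by (auto simp: less_2_cases_iff diff_def)
  qed
  then obtain t where t: "0 < t" "t < 1"
    "diff 0 1 = (\<Sum>m<2. diff m 0 / fact m * (1 - 0)^m) + diff 2 t / fact 2 * (1 - 0)^2"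
    using Taylor[where n=2 and diff=diff and f="diff 0" and a=0 and b=1 and c=0 and x=1] by auto
  then show ?thesis by (intro exI[of _ t]) (simp add: diff_def numeral_2_eq_2 h_def)
qed

lemma zero_set_correction:
  fixes F :: "'a::euclidean_space \<Rightarrow> 'b::euclidean_space"
  assumes W: "subspace W" and c: "c > 0" and A: "linear A" and g: "linear g"
    and g_bound: "\<And>y. norm (g y) \<le> c * norm y" and gW: "\<And>y. g y \<in> W"
    and gA: "\<And>w. w \<in> W \<Longrightarrow> g (A w) = w" and Ag: "\<And>y. y \<in> range A \<Longrightarrow> A (g y) = y"
    and lin_err: "\<And>x x'. x \<in> ball q \<delta> \<Longrightarrow> x' \<in> ball q \<delta> \<Longrightarrow>
      norm (F x - F x' - A (x - x')) \<le> norm (x - x') / (2 * c)"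
    and rng: "\<And>x. x \<in> ball q \<delta> \<Longrightarrow> F x \<in> range A"
    and z: "norm (z - q) + 2 * c * norm (F z) < \<delta>"
  obtains w where "w \<in> W" and "norm w \<le> 2 * c * norm (F z)" and "F (z + w) = 0"
proof -
  define T where "T w = w - g (F (z + w))" for w
  have near: "z + w \<in> ball q \<delta>" if "norm w \<le> 2 * c * norm (F z)" for w
  proof -
    have "norm (q - (z + w)) \<le> norm (z - q) + norm w"
      using norm_triangle_ineq[of "z - q" w] by (simp add: norm_minus_commute algebra_simps)
    then show ?thesis using that z by (simp add: dist_norm)
  qed
  obtain w where w: "w \<in> W" "norm w \<le> 2 * c * norm (F z)" "T w = w"
  proof (rule contraction_fixpoint_in_subspace[OF W])
    show "T w \<in> W" if "w \<in> W" for w using that gW W by (simp add: T_def subspace_diff)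
    show "norm (T w - T w') \<le> norm (w - w') / 2"
      if "w \<in> W" "w' \<in> W" "norm w \<le> 2 * c * norm (F z)" "norm w' \<le> 2 * c * norm (F z)" for w w'
    proof -
      have "w - w' \<in> W" using that W by (simp add: subspace_diff)
      then have "T w - T w' = g (A ((z + w) - (z + w'))) - (g (F (z + w)) - g (F (z + w')))"
        using gA by (simp add: T_def)
      also have "\<dots> = - g (F (z + w) - F (z + w') - A ((z + w) - (z + w')))"
        using g by (simp add: linear_diff)
      finally have "T w - T w' = - g (F (z + w) - F (z + w') - A ((z + w) - (z + w')))" .
      then have "norm (T w - T w') \<le> c * norm (F (z + w) - F (z + w') - A ((z + w) - (z + w')))"
        using g_bound by (simp only: norm_minus_cancel)
      also have "\<dots> \<le> c * (norm (w - w') / (2 * c))"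
        using lin_err[OF near near] that c by (intro mult_left_mono) simp_all
      finally show ?thesis using c by simp
    qed
    show "norm (T 0) \<le> 2 * c * norm (F z) / 2" using g_bound[of "F z"] by (simp add: T_def)
  qed
  have "g (F (z + w)) = 0" using w(3) by (simp add: T_def)
  then have "F (z + w) = A 0" using Ag[OF rng[OF near[OF w(2)]]] by simp
  then show ?thesis using that w A by (simp add: linear_0)
qed

lemma uniform_linearization_near:
  fixes F :: "'a::euclidean_space \<Rightarrow> 'b::euclidean_space"
  assumes U: "open U" "q \<in> U"
    and der: "\<And>x. x \<in> U \<Longrightarrow> (F has_derivative blinfun_apply (Df x)) (at x)"
    and cont: "isCont Df q" and \<epsilon>: "\<epsilon> > 0"
  obtains \<delta> where "\<delta> > 0" and "ball q \<delta> \<subseteq> U"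
    and "\<And>x x'. x \<in> ball q \<delta> \<Longrightarrow> x' \<in> ball q \<delta> \<Longrightarrow> norm (F x - F x' - Df q (x - x')) \<le> \<epsilon> * norm (x - x')"
proof -
  obtain \<delta>0 where \<delta>0: "\<delta>0 > 0" "ball q \<delta>0 \<subseteq> U" using U openE by blast
  obtain \<delta>1 where \<delta>1: "\<delta>1 > 0" "\<And>z. dist z q < \<delta>1 \<Longrightarrow> dist (Df z) (Df q) < \<epsilon>"
    using cont \<epsilon> unfolding continuous_at_eps_delta by blast
  define \<delta> where "\<delta> = min \<delta>0 \<delta>1"
  have ball: "ball q \<delta> \<subseteq> U" using \<delta>0 by (auto simp: \<delta>_def)
  have "norm (Df z - Df q) \<le> \<epsilon>" if "z \<in> ball q \<delta>" for z
    using \<delta>1(2)[of z] that by (simp add: \<delta>_def dist_norm norm_minus_commute)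
  then have "norm (F x - F x' - Df q (x - x')) \<le> \<epsilon> * norm (x - x')"
    if "x \<in> ball q \<delta>" "x' \<in> ball q \<delta>" for x x'
    using ball der by (intro norm_linearization_error_le[OF convex_ball _ _ that]) auto
  moreover have "\<delta> > 0" using \<delta>0 \<delta>1 by (simp add: \<delta>_def)
  ultimately show ?thesis using that ball by blast
qed

lemma zero_set_corrections_near:
  fixes F :: "'a::euclidean_space \<Rightarrow> 'b::euclidean_space"
  assumes U: "open U" "q \<in> U"
    and der: "\<And>x. x \<in> U \<Longrightarrow> (F has_derivative blinfun_apply (Df x)) (at x)"
    and cont: "isCont Df q" and rng: "\<And>x. x \<in> U \<Longrightarrow> F x \<in> range (Df q)"
  obtains \<delta> c where "\<delta> > 0" and "ball q \<delta> \<subseteq> U" and "c > 0"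
    and "\<And>z. norm (z - q) + 2 * c * norm (F z) < \<delta> \<Longrightarrow> \<exists>w. norm w \<le> 2 * c * norm (F z) \<and> F (z + w) = 0"
proof -
  let ?A = "blinfun_apply (Df q)"
  have A: "linear ?A" by (simp add: blinfun.bounded_linear_right bounded_linear.linear)
  obtain c g where c: "c > 0" and g: "linear g" "\<And>y. norm (g y) \<le> c * norm y"
    "\<And>y. g y \<in> orthogonal_comp (?A -` {0})"
    "\<And>w. w \<in> orthogonal_comp (?A -` {0}) \<Longrightarrow> g (?A w) = w"
    "\<And>y. y \<in> range ?A \<Longrightarrow> ?A (g y) = y"
    using linear_right_inverse_on_kernel_complement[OF A] by metis
  obtain \<delta> where \<delta>: "\<delta> > 0" "ball q \<delta> \<subseteq> U"
    and lin_err: "\<And>x x'. x \<in> ball q \<delta> \<Longrightarrow> x' \<in> ball q \<delta> \<Longrightarrow>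
      norm (F x - F x' - ?A (x - x')) \<le> 1 / (2 * c) * norm (x - x')"
    using uniform_linearization_near[OF U der cont, of "1 / (2 * c)"] c by auto
  have "\<exists>w. norm w \<le> 2 * c * norm (F z) \<and> F (z + w) = 0" if "norm (z - q) + 2 * c * norm (F z) < \<delta>" for z
    using zero_set_correction[OF subspace_orthogonal_comp c A g, of q \<delta> F z] lin_err rng \<delta>(2) that
    by (metis (no_types, lifting) subsetD times_divide_eq_left mult_1)
  then show ?thesis using that \<delta> c by blast
qed

lemma has_derivative_zero_along_kernel:
  assumes "(F has_derivative A) (at q)" and "A v = 0" and "linear A"
  shows "((\<lambda>t. F (q + t *\<^sub>R v)) has_derivative (\<lambda>_. 0)) (at 0)"
proof -
  have "((\<lambda>t. q + t *\<^sub>R v) has_derivative (\<lambda>s. s *\<^sub>R v)) (at 0)"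
    by (auto intro!: derivative_eq_intros)
  moreover have "(F has_derivative A) (at ((\<lambda>t. q + t *\<^sub>R v) 0))" using assms(1) by simp
  ultimately have "((\<lambda>t. F (q + t *\<^sub>R v)) has_derivative (\<lambda>s. A (s *\<^sub>R v))) (at 0)"
    by (rule has_derivative_compose)
  then show ?thesis using assms(2,3) by (simp add: linear_scale)
qed

lemma zero_set_curve:
  fixes F :: "'a::euclidean_space \<Rightarrow> 'b::euclidean_space"
  assumes U: "open U" "q \<in> U" and F0: "F q = 0"
    and der: "\<And>x. x \<in> U \<Longrightarrow> (F has_derivative blinfun_apply (Df x)) (at x)"
    and cont: "isCont Df q"
    and rng: "\<And>x. x \<in> U \<Longrightarrow> F x \<in> range (Df q)"
    and v: "Df q v = 0"
  obtains \<gamma> \<epsilon> where "\<gamma> 0 = q" and "(\<gamma> has_vector_derivative v) (at 0)" and "\<epsilon> > 0"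
    and "\<And>t. \<bar>t\<bar> < \<epsilon> \<Longrightarrow> \<gamma> t \<in> U \<and> F (\<gamma> t) = 0"
proof -
  obtain \<delta> c where \<delta>: "\<delta> > 0" "ball q \<delta> \<subseteq> U" and c: "c > 0"
    and correction: "\<And>z. norm (z - q) + 2 * c * norm (F z) < \<delta> \<Longrightarrow>
      \<exists>w. norm w \<le> 2 * c * norm (F z) \<and> F (z + w) = 0"
    using zero_set_corrections_near[OF U der cont rng] by blast
  define \<phi> where "\<phi> t = F (q + t *\<^sub>R v)" for t
  have \<phi>': "(\<phi> has_derivative (\<lambda>_. 0)) (at 0)" unfolding \<phi>_def[abs_def]
    using der[OF U(2)] v by (rule has_derivative_zero_along_kernel)
      (simp add: blinfun.bounded_linear_right bounded_linear.linear)
  have \<phi>0: "\<phi> 0 = 0" using F0 by (simp add: \<phi>_def)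
  define h where "h t = norm (t *\<^sub>R v) + 2 * c * norm (\<phi> t)" for t
  have "isCont h 0"
    unfolding h_def[abs_def] using has_derivative_continuous[OF \<phi>'] by (intro continuous_intros)
  then obtain \<epsilon> where \<epsilon>: "\<epsilon> > 0" and "\<And>t. dist t 0 < \<epsilon> \<Longrightarrow> dist (h t) (h 0) < \<delta>"
    using \<delta>(1) unfolding continuous_at_eps_delta by blast
  then have small: "norm (t *\<^sub>R v) + 2 * c * norm (\<phi> t) < \<delta>" if "\<bar>t\<bar> < \<epsilon>" for t
    using that \<phi>0 by (fastforce simp: h_def dist_real_def)
  then have "\<exists>w. norm w \<le> 2 * c * norm (\<phi> t) \<and> F (q + t *\<^sub>R v + w) = 0" if "\<bar>t\<bar> < \<epsilon>" for t
    using correction[of "q + t *\<^sub>R v"] that by (simp add: \<phi>_def)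
  then obtain w where w: "\<And>t. \<bar>t\<bar> < \<epsilon> \<Longrightarrow> norm (w t) \<le> 2 * c * norm (\<phi> t) \<and> F (q + t *\<^sub>R v + w t) = 0"
    by metis
  define \<gamma> where "\<gamma> t = q + t *\<^sub>R v + w t" for t
  have w0: "w 0 = 0" using w[of 0] \<epsilon> \<phi>0 by simp
  have "\<forall>\<^sub>F t in at 0. \<bar>t\<bar> < \<epsilon>" using \<epsilon> by (auto simp: eventually_at dist_norm)
  then have "\<forall>\<^sub>F t in at 0. norm (w t) \<le> 2 * c * norm (\<phi> t)" by eventually_elim (use w in blast)
  then have "(w has_derivative (\<lambda>_. 0)) (at 0)"
    by (rule has_derivative_zero_if_dominated[where w=w, OF \<phi>' \<phi>0 w0])
  then have "(\<gamma> has_vector_derivative v) (at 0)"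
    unfolding \<gamma>_def has_vector_derivative_def by (auto intro!: derivative_eq_intros)
  moreover have "\<gamma> t \<in> U \<and> F (\<gamma> t) = 0" if "\<bar>t\<bar> < \<epsilon>" for t
  proof -
    have "norm (q - \<gamma> t) = norm (t *\<^sub>R v + w t)"
      using norm_minus_commute[of q "\<gamma> t"] by (simp add: \<gamma>_def)
    then have "norm (q - \<gamma> t) \<le> norm (t *\<^sub>R v) + norm (w t)" using norm_triangle_ineq by metis
    then have "\<gamma> t \<in> ball q \<delta>" using w[OF that] small[OF that] by (simp add: dist_norm)
    then show ?thesis using \<delta>(2) w[OF that] by (auto simp: \<gamma>_def)
  qed
  ultimately show ?thesis using \<epsilon> w0 by (intro that[of \<gamma> \<epsilon>]) (simp_all add: \<gamma>_def)
qed


lemma tangent_space_subset_kernel: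
  fixes F :: "'a::euclidean_space \<Rightarrow> 'b::euclidean_space"
  assumes U: "open U" "q \<in> U" and MU: "M \<inter> U = {x\<in>U. F x = 0}"
    and der: "(F has_derivative A) (at q)"
  shows "tangent_space M q \<subseteq> {v. A v = 0}"
proof
  fix v assume "v \<in> tangent_space M q"
  then obtain \<gamma> \<epsilon> where \<gamma>0: "\<gamma> 0 = q" and \<gamma>': "(\<gamma> has_derivative (\<lambda>s. s *\<^sub>R v)) (at 0)"
    and \<epsilon>: "\<epsilon> > 0" "\<And>t. \<bar>t\<bar> < \<epsilon> \<Longrightarrow> \<gamma> t \<in> M"
    unfolding tangent_space_def has_vector_derivative_def by blast
  have "(\<gamma> \<longlongrightarrow> q) (at 0)" using has_derivative_continuous[OF \<gamma>'] \<gamma>0 by (simp add: isCont_def)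
  then have "\<forall>\<^sub>F t in at 0. \<gamma> t \<in> U" using U by (rule topological_tendstoD)
  moreover have "\<forall>\<^sub>F t in at 0. \<bar>t\<bar> < \<epsilon>" using \<epsilon> by (auto simp: eventually_at dist_norm)
  ultimately have ev: "\<forall>\<^sub>F t in at 0. F (\<gamma> t) = 0" by eventually_elim (use \<epsilon>(2) MU in auto)
  have dF: "((\<lambda>t. F (\<gamma> t)) has_derivative (\<lambda>s. A (s *\<^sub>R v))) (at 0)"
    using has_derivative_compose[OF \<gamma>'] der \<gamma>0 by simp
  have "\<gamma> 0 \<in> M" using \<epsilon> by simp
  then have "F (\<gamma> 0) = 0" using MU U \<gamma>0 by auto
  then have "((\<lambda>t. 0) has_derivative (\<lambda>s. A (s *\<^sub>R v))) (at (0::real))"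
    using has_derivative_transform_eventually[OF dF ev] by simp
  then have "(\<lambda>s. A (s *\<^sub>R v)) = (\<lambda>_. 0)"
    by (rule has_derivative_unique) simp
  then have "A (1 *\<^sub>R v) = 0" by (rule fun_cong)
  then show "v \<in> {v. A v = 0}" by simp
qed

lemma tangent_space_zero_set:
  fixes F :: "'a::euclidean_space \<Rightarrow> 'b::euclidean_space"
  assumes U: "open U" "q \<in> U" and MU: "M \<inter> U = {x\<in>U. F x = 0}" and qM: "q \<in> M"
    and der: "\<And>x. x \<in> U \<Longrightarrow> (F has_derivative blinfun_apply (Df x)) (at x)"
    and cont: "isCont Df q"
    and rng: "\<And>x. x \<in> U \<Longrightarrow> F x \<in> range (Df q)"
  shows "tangent_space M q = {v. Df q v = 0}"
proof
  show "tangent_space M q \<subseteq> {v. Df q v = 0}"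
    by (rule tangent_space_subset_kernel[OF U MU der[OF U(2)]])
  show "{v. Df q v = 0} \<subseteq> tangent_space M q"
  proof clarify
    fix v assume "Df q v = 0"
    moreover have "F q = 0" using qM U MU by auto
    ultimately obtain \<gamma> \<epsilon> where "\<gamma> 0 = q" "(\<gamma> has_vector_derivative v) (at 0)" "\<epsilon> > 0"
      "\<And>t. \<bar>t\<bar> < \<epsilon> \<Longrightarrow> \<gamma> t \<in> U \<and> F (\<gamma> t) = 0"
      using zero_set_curve[OF U _ der cont rng] by metis
    then show "v \<in> tangent_space M q" unfolding tangent_space_def using MU by blast
  qed
qed


lemma norm_linearization_error_le_quadratic:
  fixes F :: "'a::euclidean_space \<Rightarrow> 'b::euclidean_space"
  assumes S: "convex S"
    and der: "\<And>z. z \<in> S \<Longrightarrow> (F has_derivative blinfun_apply (Df z)) (at z)"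
    and der2: "\<And>z. z \<in> S \<Longrightarrow> (Df has_derivative blinfun_apply (D2f z)) (at z)"
    and L: "\<And>z. z \<in> S \<Longrightarrow> norm (D2f z) \<le> L"
    and q: "q \<in> S" and x: "x \<in> S"
  shows "norm (F x - F q - Df q (x - q)) \<le> L * (norm (x - q))\<^sup>2"
proof -
  have seg: "closed_segment q x \<subseteq> S" using S q x by (simp add: closed_segment_subset)
  have "0 \<le> L" using L[OF q] norm_ge_zero order_trans by blast
  have "norm (Df z - Df q) \<le> L * norm (x - q)" if "z \<in> closed_segment q x" for z
  proof -
    have "norm (Df z - Df q) \<le> L * norm (z - q)"
      using seg that q by (intro lipschitz_bound_by_derivative[OF S der2 L]) auto
    also have "\<dots> \<le> L * norm (x - q)" using segment_bound1[OF that] \<open>0 \<le> L\<close> by (rule mult_left_mono)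
    finally show ?thesis .
  qed
  then have "norm (F x - F q - Df q (x - q)) \<le> L * norm (x - q) * norm (x - q)"
    using seg der by (intro norm_linearization_error_le[OF convex_closed_segment]) auto
  then show ?thesis by (simp add: power2_eq_square mult.assoc)
qed

lemma norm_diff_orth_proj_kernel_le:
  fixes A :: "'a::euclidean_space \<Rightarrow>\<^sub>L 'b::euclidean_space"
  assumes "\<And>w. w \<in> W \<Longrightarrow> norm w \<le> c * norm (A w)" and "A y \<in> A ` W"
  shows "norm (y - orth_proj {v. A v = 0} y) \<le> c * norm (A y)"
proof -
  have K: "subspace {v. A v = 0}" by (auto simp: subspace_def blinfun.add_right blinfun.scaleR_right)
  obtain w where "w \<in> W" "A w = A y" using assms(2) by (metis imageE)
  then have "y - w \<in> {v. A v = 0}" by (simp add: blinfun.diff_right)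
  then have "norm (y - orth_proj {v. A v = 0} y) \<le> norm w" using orth_proj_nearest[OF K, of "y - w" y] by simp
  also have "\<dots> \<le> c * norm (A y)" using assms(1)[OF \<open>w \<in> W\<close>] \<open>A w = A y\<close> by simp
  finally show ?thesis .
qed

lemma lower_bound_perturbation:
  fixes A B :: "'a::real_normed_vector \<Rightarrow>\<^sub>L 'b::real_normed_vector"
  assumes c: "c > 0" and A: "norm w \<le> c * norm (A w)" and AB: "norm (A - B) \<le> 1 / (2 * c)"
  shows "norm w \<le> 2 * c * norm (B w)"
proof -
  have "norm ((A - B) w) \<le> 1 / (2 * c) * norm w"
    using AB norm_blinfun[of "A - B" w] by (meson mult_right_mono norm_ge_zero order_trans)
  moreover have "norm (A w) \<le> norm (B w) + norm ((A - B) w)"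
    using norm_triangle_ineq[of "B w" "(A - B) w"] by (simp add: blinfun.diff_left)
  ultimately have "c * norm (A w) \<le> c * (norm (B w) + 1 / (2 * c) * norm w)"
    using c by (intro mult_left_mono) simp_all
  also have "\<dots> = c * norm (B w) + norm w / 2" using c by (simp add: field_simps)
  finally show ?thesis using A by simp
qed

lemma derivative_uniformly_injective_near:
  fixes Df :: "'a::euclidean_space \<Rightarrow> 'a \<Rightarrow>\<^sub>L 'b::euclidean_space"
  assumes U: "open U" "p \<in> U" and S: "subspace S" and cont: "isCont Df p"
    and rng: "\<And>x. x \<in> U \<Longrightarrow> range (Df x) = S"
  obtains r c W where "r > 0" and "ball p r \<subseteq> U" and "c > 0" and "subspace W"
    and "\<And>q w. q \<in> ball p r \<Longrightarrow> w \<in> W \<Longrightarrow> norm w \<le> c * norm (Df q w)"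
    and "\<And>q. q \<in> ball p r \<Longrightarrow> Df q ` W = S"
proof -
  let ?A = "blinfun_apply (Df p)"
  define W where "W = orthogonal_comp (?A -` {0})"
  have A: "linear ?A" by (simp add: blinfun.bounded_linear_right bounded_linear.linear)
  have W: "subspace W" by (simp add: W_def subspace_orthogonal_comp)
  obtain c g where c: "c > 0" and g: "linear g" "\<And>y. norm (g y) \<le> c * norm y" "\<And>y. g y \<in> W"
    "\<And>w. w \<in> W \<Longrightarrow> g (?A w) = w" "\<And>y. y \<in> range ?A \<Longrightarrow> ?A (g y) = y"
    unfolding W_def using linear_right_inverse_on_kernel_complement[OF A] by metis
  obtain r0 where r0: "r0 > 0" "ball p r0 \<subseteq> U" using U openE by blast
  have "1 / (2 * c) > 0" using c by simp
  then obtain r1 where r1: "r1 > 0" "\<And>x. dist x p < r1 \<Longrightarrow> dist (Df x) (Df p) < 1 / (2 * c)"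
    using cont unfolding continuous_at_eps_delta by blast
  define r where "r = min r0 r1"
  have ball: "ball p r \<subseteq> U" using r0 by (auto simp: r_def)
  have lower: "norm w \<le> 2 * c * norm (Df q w)" if q: "q \<in> ball p r" and w: "w \<in> W" for q w
  proof (rule lower_bound_perturbation[OF c])
    show "norm w \<le> c * norm (?A w)" using g(2)[of "?A w"] g(4)[OF w] by simp
    show "norm (Df p - Df q) \<le> 1 / (2 * c)"
      using r1(2)[of q] q by (simp add: r_def dist_norm norm_minus_commute)
  qed
  have "dim W = dim S"
  proof -
    have "y \<in> ?A ` W" if "y \<in> range ?A" for y using g(3)[of y] g(5)[OF that] by (metis image_eqI)
    then have "range ?A = ?A ` W" by blast
    moreover have "inj_on ?A W" using g(4) by (metis inj_onI)
    ultimately show ?thesis using dim_image_eq[OF A] rng[OF U(2)] W by (metis span_eq_iff)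
  qed
  moreover have "Df q ` W = S" if q: "q \<in> ball p r" for q
  proof -
    have Aq: "linear (blinfun_apply (Df q))" by (simp add: blinfun.bounded_linear_right bounded_linear.linear)
    have "inj_on (Df q) W"
    proof (rule inj_onI)
      fix w w' assume "w \<in> W" "w' \<in> W" "Df q w = Df q w'"
      then show "w = w'" using lower[OF q, of "w - w'"] W by (simp add: subspace_diff blinfun.diff_right)
    qed
    then have "dim (Df q ` W) = dim W" using dim_image_eq[OF Aq] W by (metis span_eq_iff)
    moreover have "Df q ` W \<subseteq> S" using rng ball q by blast
    ultimately show ?thesis
      using subspace_dim_equal[OF linear_subspace_image[OF Aq W] S] \<open>dim W = dim S\<close> by simp
  qed
  moreover have "r > 0" using r0 r1 by (simp add: r_def)
  ultimately show ?thesis using that[OF _ ball _ W lower] c by simp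
qed


lemma zero_set_tangent_deviation_quadratic:
  fixes F :: "'a::euclidean_space \<Rightarrow> 'b::euclidean_space"
  assumes U: "open U" "p \<in> U" and S: "subspace S"
    and der: "\<And>x. x \<in> U \<Longrightarrow> (F has_derivative blinfun_apply (Df x)) (at x)"
    and der2: "\<And>x. x \<in> U \<Longrightarrow> (Df has_derivative blinfun_apply (D2f x)) (at x)"
    and D2f: "continuous_on U D2f"
    and FS: "\<And>x. x \<in> U \<Longrightarrow> F x \<in> S"
    and rng: "\<And>x. x \<in> U \<Longrightarrow> range (Df x) = S"
    and MU: "M \<inter> U = {x\<in>U. F x = 0}"
  obtains r C where "r > 0"
    and "\<And>q. q \<in> M \<inter> ball p r \<Longrightarrow> tangent_space M q = {v. Df q v = 0}"
    and "\<And>q x. q \<in> M \<inter> ball p r \<Longrightarrow> x \<in> M \<inter> ball p r \<Longrightarrow>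
      norm ((x - q) - orth_proj (tangent_space M q) (x - q)) \<le> C * (norm (x - q))\<^sup>2"
proof -
  have cont: "isCont Df x" if "x \<in> U" for x using der2[OF that] by (rule has_derivative_continuous)
  obtain r0 c W where r0: "r0 > 0" "ball p r0 \<subseteq> U" and c: "c > 0" and W: "subspace W"
    and lower: "\<And>q w. q \<in> ball p r0 \<Longrightarrow> w \<in> W \<Longrightarrow> norm w \<le> c * norm (Df q w)"
    and onto: "\<And>q. q \<in> ball p r0 \<Longrightarrow> Df q ` W = S"
    using derivative_uniformly_injective_near[OF U S cont[OF U(2)] rng] by metis
  have "isCont D2f p" using D2f U by (simp add: continuous_on_eq_continuous_at)
  then obtain r1 where r1: "r1 > 0" "\<And>x. dist x p < r1 \<Longrightarrow> dist (D2f x) (D2f p) < 1"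
    unfolding continuous_at_eps_delta using zero_less_one by blast
  define r where "r = min r0 r1"
  define L where "L = norm (D2f p) + 1"
  have inU: "z \<in> U" if "z \<in> ball p r" for z using that r0 by (auto simp: r_def)
  have D2_bound: "norm (D2f z) \<le> L" if "z \<in> ball p r" for z
    using r1(2)[of z] that norm_triangle_sub[of "D2f z" "D2f p"]
    by (simp add: r_def L_def dist_norm norm_minus_commute)
  have tangent: "tangent_space M q = {v. Df q v = 0}" if "q \<in> M \<inter> ball p r" for q
    using that inU FS rng by (intro tangent_space_zero_set[OF U(1) _ MU _ der cont]) auto
  have "norm ((x - q) - orth_proj (tangent_space M q) (x - q)) \<le> (c * L) * (norm (x - q))\<^sup>2"
    if q: "q \<in> M \<inter> ball p r" and x: "x \<in> M \<inter> ball p r" for q x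
  proof -
    have "q \<in> ball p r0" using q by (simp add: r_def)
    moreover have "q \<in> U" using inU q by simp
    ultimately have "Df q (x - q) \<in> Df q ` W" using onto rng by (metis rangeI)
    then have "norm ((x - q) - orth_proj (tangent_space M q) (x - q)) \<le> c * norm (Df q (x - q))"
      unfolding tangent[OF q] using \<open>q \<in> ball p r0\<close> by (intro norm_diff_orth_proj_kernel_le[OF lower])
    also have "norm (Df q (x - q)) \<le> L * (norm (x - q))\<^sup>2"
    proof -
      have "F x = 0" "F q = 0" using MU q x inU by auto
      then show ?thesis using norm_linearization_error_le_quadratic[OF convex_ball, of p r F Df D2f L q x]
        der der2 inU D2_bound q x by auto
    qed
    finally show ?thesis using c by (simp add: mult_left_mono mult.assoc)
  qed
  moreover have "r > 0" using r0 r1 by (simp add: r_def)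
  ultimately show ?thesis using that tangent by blast
qed


lemma C2_submanifold_tangent_deviation:
  fixes M :: "'a::euclidean_space set"
  assumes "C2_submanifold M k" and "p \<in> M"
  obtains r C where "r > 0" and "\<And>q. q \<in> M \<inter> ball p r \<Longrightarrow> subspace (tangent_space M q)"
    and "\<And>q x. q \<in> M \<inter> ball p r \<Longrightarrow> x \<in> M \<inter> ball p r \<Longrightarrow>
      norm ((x - q) - orth_proj (tangent_space M q) (x - q)) \<le> C * (norm (x - q))\<^sup>2"
proof -
  obtain V and F :: "'a \<Rightarrow> 'a" and S where V: "open V" "p \<in> V" and S: "subspace S"
    and F: "C2_on V F" "\<forall>x\<in>V. F x \<in> S" "\<forall>x\<in>V. range (frechet_derivative F (at x)) = S"
    and MV: "M \<inter> V = {x\<in>V. F x = 0}"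
    using assms unfolding C2_submanifold_def by blast
  obtain Df D2f where Df: "\<forall>x\<in>V. (F has_derivative blinfun_apply (Df x)) (at x)"
    and D2f: "\<forall>x\<in>V. (Df has_derivative blinfun_apply (D2f x)) (at x)" "continuous_on V D2f"
    using F(1) unfolding C2_on_def by blast
  have "range (Df x) = S" if "x \<in> V" for x
    using F(3) frechet_derivative_at[of F "Df x" x] Df that by simp
  then obtain r C where "r > 0" and T: "\<And>q. q \<in> M \<inter> ball p r \<Longrightarrow> tangent_space M q = {v. Df q v = 0}"
    and "\<And>q x. q \<in> M \<inter> ball p r \<Longrightarrow> x \<in> M \<inter> ball p r \<Longrightarrow>
      norm ((x - q) - orth_proj (tangent_space M q) (x - q)) \<le> C * (norm (x - q))\<^sup>2"
    using zero_set_tangent_deviation_quadratic[OF V S, of F Df D2f M] Df D2f F(2) MV by blast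
  moreover have "subspace (tangent_space M q)" if "q \<in> M \<inter> ball p r" for q
    unfolding T[OF that] by (auto simp: subspace_def blinfun.add_right blinfun.scaleR_right)
  ultimately show ?thesis using that by blast
qed

lemma subspace_tangent_space_C2_submanifold:
  assumes "C2_submanifold M k" and "q \<in> M"
  shows "subspace (tangent_space M q)"
proof -
  obtain r C where "r > 0" "\<And>q'. q' \<in> M \<inter> ball q r \<Longrightarrow> subspace (tangent_space M q')"
    "\<And>q' x. q' \<in> M \<inter> ball q r \<Longrightarrow> x \<in> M \<inter> ball q r \<Longrightarrow>
      norm ((x - q') - orth_proj (tangent_space M q') (x - q')) \<le> C * (norm (x - q'))\<^sup>2"
    by (rule C2_submanifold_tangent_deviation[OF assms], rule that)
  then show ?thesis using assms(2) by simp
qed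

lemma compact_uniform_local_bound:
  fixes S :: "'a::metric_space set" and f g :: "'a \<Rightarrow> 'a \<Rightarrow> real"
  assumes "compact S" and g: "\<And>q x. q \<in> S \<Longrightarrow> x \<in> S \<Longrightarrow> 0 \<le> g q x"
    and local: "\<And>p. p \<in> S \<Longrightarrow> \<exists>r>0. \<exists>C. \<forall>q\<in>S \<inter> ball p r. \<forall>x\<in>S \<inter> ball p r. f q x \<le> C * g q x"
  shows "\<exists>\<delta>>0. \<exists>C. \<forall>q\<in>S. \<forall>x\<in>S. dist q x < \<delta> \<longrightarrow> f q x \<le> C * g q x"
proof -
  obtain r where r: "\<forall>p\<in>S. r p > 0 \<and> (\<exists>C. \<forall>q\<in>S \<inter> ball p (r p). \<forall>x\<in>S \<inter> ball p (r p). f q x \<le> C * g q x)"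
    using local by (metis bchoice)
  then obtain C where C: "\<forall>p\<in>S. \<forall>q\<in>S \<inter> ball p (r p). \<forall>x\<in>S \<inter> ball p (r p). f q x \<le> C p * g q x"
    by (metis bchoice)
  have "S \<subseteq> \<Union> ((\<lambda>p. ball p (r p)) ` S)" using r by force
  then obtain P where P: "P \<subseteq> S" "finite P" "S \<subseteq> \<Union> ((\<lambda>p. ball p (r p)) ` P)"
    by (rule compactE_image[OF assms(1) open_ball]) blast
  obtain \<delta> where \<delta>: "\<delta> > 0" "\<And>q. q \<in> S \<Longrightarrow> \<exists>B \<in> (\<lambda>p. ball p (r p)) ` P. ball q \<delta> \<subseteq> B"
    by (rule Heine_Borel_lemma[OF assms(1) P(3)]) auto
  define Cmax where "Cmax = Max (insert 0 (C ` P))"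
  have "f q x \<le> Cmax * g q x" if qx: "q \<in> S" "x \<in> S" "dist q x < \<delta>" for q x
  proof -
    obtain p where p: "p \<in> P" "ball q \<delta> \<subseteq> ball p (r p)" using \<delta>(2)[OF qx(1)] by (auto simp: image_iff)
    have "q \<in> ball q \<delta>" "x \<in> ball q \<delta>" using \<delta>(1) qx(3) by simp_all
    then have "q \<in> ball p (r p)" "x \<in> ball p (r p)" using p(2) by blast+
    then have "f q x \<le> C p * g q x" using C p(1) P(1) qx by blast
    also have "\<dots> \<le> Cmax * g q x"
      using p(1) P(2) g[OF qx(1,2)] by (intro mult_right_mono) (auto simp: Cmax_def)
    finally show ?thesis .
  qed
  then show ?thesis using \<delta>(1) by blast
qed

lemma norm_sq_le_height_from_second_order:
  fixes X :: "'a::real_inner \<Rightarrow>\<^sub>L ('a \<Rightarrow>\<^sub>L real)"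
  assumes \<nu>: "norm \<nu> = 1" and v: "v \<bullet> \<nu> = 0" and a: "0 \<le> a" and K: "K > 0"
    and X: "norm X \<le> L" and Xvv: "K * (norm v)\<^sup>2 \<le> X v v"
    and Xhh: "X (v + a *\<^sub>R \<nu>) (v + a *\<^sub>R \<nu>) \<le> 2 * G * a"
    and R: "norm (v + a *\<^sub>R \<nu>) \<le> R"
  shows "(norm (v + a *\<^sub>R \<nu>))\<^sup>2 \<le> ((2 * G + 3 * L * R) / K + R) * a"
proof -
  have L: "0 \<le> L" using X norm_ge_zero order_trans by blast
  have pythagoras: "(norm (v + a *\<^sub>R \<nu>))\<^sup>2 = (norm v)\<^sup>2 + a\<^sup>2"
    using norm_add_Pythagorean[of v "a *\<^sub>R \<nu>"] v \<nu> a by (simp add: orthogonal_def)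
  then have "(norm v)\<^sup>2 \<le> (norm (v + a *\<^sub>R \<nu>))\<^sup>2" "a\<^sup>2 \<le> (norm (v + a *\<^sub>R \<nu>))\<^sup>2" by simp_all
  then have "norm v \<le> R" "a \<le> R" using R a by (simp_all add: power2_le_iff_abs_le)
  note R = this
  have expand: "X (v + a *\<^sub>R \<nu>) (v + a *\<^sub>R \<nu>) = X v v + a * X v \<nu> + a * X \<nu> v + a * (a * X \<nu> \<nu>)"
    by (simp add: blinfun.add_left blinfun.add_right blinfun.scaleR_left blinfun.scaleR_right
      distrib_left)
  have "\<bar>X v \<nu>\<bar> \<le> L * R" "\<bar>X \<nu> v\<bar> \<le> L * R" "\<bar>X \<nu> \<nu>\<bar> \<le> L"
    using abs_blinfun_bilinear_le[of X v \<nu>] abs_blinfun_bilinear_le[of X \<nu> v]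
      abs_blinfun_bilinear_le[of X \<nu> \<nu>] X \<nu> mult_mono[OF X R(1) L norm_ge_zero]
    by simp_all
  then have "- (L * R) \<le> X v \<nu>" "- (L * R) \<le> X \<nu> v" "- L \<le> X \<nu> \<nu>" by (simp_all add: abs_le_iff)
  then have lower: "a * (- (L * R)) \<le> a * X v \<nu>" "a * (- (L * R)) \<le> a * X \<nu> v" "a * (- L) \<le> a * X \<nu> \<nu>"
    using mult_left_mono a by blast+
  have "a * (a * (- L)) \<le> a * (a * X \<nu> \<nu>)" using lower(3) a by (rule mult_left_mono)
  moreover have "a * (a * L) \<le> a * (R * L)" using a R L by (intro mult_left_mono mult_right_mono)
  ultimately have "K * (norm v)\<^sup>2 \<le> (2 * G + 3 * L * R) * a"
    using Xvv Xhh expand lower(1,2) by (simp add: algebra_simps)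
  then have "(norm v)\<^sup>2 \<le> (2 * G + 3 * L * R) / K * a" using K by (simp add: field_simps)
  moreover have "a\<^sup>2 \<le> R * a" using a R by (simp add: power2_eq_square mult_right_mono)
  ultimately show ?thesis using pythagoras by (simp add: algebra_simps)
qed

lemma quadratic_form_lower_bound_perturbation:
  fixes X Y :: "'a::real_normed_vector \<Rightarrow>\<^sub>L ('a \<Rightarrow>\<^sub>L real)"
  assumes "K * (norm v)\<^sup>2 \<le> X v v" and "norm (Y - X) \<le> \<eta>"
  shows "(K - \<eta>) * (norm v)\<^sup>2 \<le> Y v v"
proof -
  have "X v v \<le> Y v v + norm (Y - X) * norm v * norm v"
    using abs_blinfun_bilinear_le[of "Y - X" v v] by (simp add: blinfun.diff_left)
  also have "norm (Y - X) * norm v * norm v \<le> \<eta> * norm v * norm v"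
    using assms(2) by (intro mult_right_mono) simp_all
  finally show ?thesis using assms(1) by (simp add: power2_eq_square algebra_simps)
qed

lemma eventually_line_in_open:
  fixes x w :: "'a::real_normed_vector"
  assumes "open U" and "x \<in> U"
  shows "\<forall>\<^sub>F h in at_right 0. x + h *\<^sub>R w \<in> U"
proof -
  have "((\<lambda>h. x + h *\<^sub>R w) \<longlongrightarrow> x) (at_right 0)" by (intro tendsto_eq_intros) auto
  then show ?thesis using assms by (rule topological_tendstoD)
qed

locale uniformly_convex_boundary =
  fixes \<Omega> :: "'a::euclidean_space set" and U :: "'a set" and \<rho> :: "'a \<Rightarrow> real"
    and D\<rho> :: "'a \<Rightarrow> 'a \<Rightarrow>\<^sub>L real" and D2\<rho> :: "'a \<Rightarrow> 'a \<Rightarrow>\<^sub>L ('a \<Rightarrow>\<^sub>L real)" and \<kappa> :: real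
  assumes convex: "convex \<Omega>" and open_\<Omega>: "open \<Omega>"
    and open_U: "open U" and frontier_subset: "frontier \<Omega> \<subseteq> U"
    and D\<rho>: "\<And>x. x \<in> U \<Longrightarrow> (\<rho> has_derivative blinfun_apply (D\<rho> x)) (at x)"
    and D2\<rho>: "\<And>x. x \<in> U \<Longrightarrow> (D\<rho> has_derivative blinfun_apply (D2\<rho> x)) (at x)"
    and D2\<rho>_cont: "continuous_on U D2\<rho>"
    and sublevel: "\<Omega> \<inter> U = {x\<in>U. \<rho> x < 0}"
    and D\<rho>_nonzero: "\<And>x. x \<in> frontier \<Omega> \<Longrightarrow> D\<rho> x \<noteq> 0"
    and \<kappa>_pos: "\<kappa> > 0"
    and hessian_convex: "\<And>x v. x \<in> frontier \<Omega> \<Longrightarrow> D\<rho> x v = 0 \<Longrightarrow> \<kappa> * norm (D\<rho> x) * (norm v)\<^sup>2 \<le> D2\<rho> x v v"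
begin

definition grad :: "'a \<Rightarrow> 'a" where "grad x = (\<Sum>b\<in>Basis. D\<rho> x b *\<^sub>R b)"

definition nu :: "'a \<Rightarrow> 'a" where "nu x = - (1 / norm (grad x)) *\<^sub>R grad x"

lemma frontier_iff: "x \<in> frontier \<Omega> \<longleftrightarrow> x \<in> closure \<Omega> \<and> x \<notin> \<Omega>"
  using open_\<Omega> by (simp add: frontier_def interior_open)

lemma rho_neg: "x \<in> \<Omega> \<Longrightarrow> x \<in> U \<Longrightarrow> \<rho> x < 0"
  using sublevel by blast

lemma grad_inner: "D\<rho> x h = grad x \<bullet> h"
proof -
  have "D\<rho> x h = D\<rho> x (\<Sum>b\<in>Basis. (h \<bullet> b) *\<^sub>R b)" by (simp add: euclidean_representation)
  also have "\<dots> = (\<Sum>b\<in>Basis. (h \<bullet> b) * D\<rho> x b)" by (simp add: blinfun.sum_right blinfun.scaleR_right)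
  also have "\<dots> = (\<Sum>b\<in>Basis. (D\<rho> x b *\<^sub>R b) \<bullet> h)" by (rule sum.cong[OF refl]) (simp add: inner_commute)
  finally show ?thesis by (simp only: grad_def inner_sum_left)
qed

lemma grad_nonzero:
  assumes "x \<in> frontier \<Omega>" shows "grad x \<noteq> 0"
proof
  assume "grad x = 0"
  then have "D\<rho> x = 0" by (intro blinfun_eqI) (simp add: grad_inner)
  then show False using D\<rho>_nonzero[OF assms] by simp
qed

lemma norm_grad_le: "norm (grad x) \<le> norm (D\<rho> x)"
proof (cases "grad x = 0")
  case False
  have "norm (grad x) * norm (grad x) = D\<rho> x (grad x)"
    by (simp add: grad_inner dot_square_norm power2_eq_square)
  also have "\<dots> \<le> norm (D\<rho> x) * norm (grad x)" using norm_blinfun[of "D\<rho> x" "grad x"] by simp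
  finally show ?thesis using False by simp
qed simp

lemma norm_nu: "x \<in> frontier \<Omega> \<Longrightarrow> norm (nu x) = 1"
  using grad_nonzero by (simp add: nu_def)

lemma D\<rho>_nu: "x \<in> frontier \<Omega> \<Longrightarrow> D\<rho> x h = - norm (grad x) * (h \<bullet> nu x)"
  using grad_nonzero by (simp add: grad_inner nu_def inner_commute)

lemma line_has_derivative:
  assumes "x \<in> U" shows "((\<lambda>t. \<rho> (x + t *\<^sub>R w)) has_real_derivative D\<rho> x w) (at 0)"
  using D\<rho>[OF assms] by (intro has_real_derivative_along_line)
    (simp_all add: blinfun.bounded_linear_right bounded_linear.linear)

lemma eventually_rho_line_less:
  assumes "x \<in> U" and "D\<rho> x w < 0"
  shows "\<forall>\<^sub>F h in at_right 0. \<rho> (x + h *\<^sub>R w) < \<rho> x \<and> x + h *\<^sub>R w \<in> U"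
proof -
  have "\<forall>\<^sub>F h in at_right 0. \<rho> (x + h *\<^sub>R w) < \<rho> x"
    using DERIV_neg_dec_right[OF line_has_derivative[OF assms(1)] assms(2)] by (simp add: eventually_at_right_field)
  then show ?thesis using eventually_line_in_open[OF open_U assms(1)] by (rule eventually_conj)
qed

lemma eventually_rho_line_greater:
  assumes "x \<in> U" and "D\<rho> x w > 0"
  shows "\<forall>\<^sub>F h in at_right 0. \<rho> (x + h *\<^sub>R w) > \<rho> x \<and> x + h *\<^sub>R w \<in> U"
proof -
  have "\<forall>\<^sub>F h in at_right 0. \<rho> (x + h *\<^sub>R w) > \<rho> x"
    using DERIV_pos_inc_right[OF line_has_derivative[OF assms(1)] assms(2)] by (simp add: eventually_at_right_field)
  then show ?thesis using eventually_line_in_open[OF open_U assms(1)] by (rule eventually_conj)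
qed

lemma eventually_line_in_domain:
  assumes "x \<in> U" and "D\<rho> x w < 0" and "\<rho> x \<le> 0"
  shows "\<forall>\<^sub>F h in at_right 0. x + h *\<^sub>R w \<in> \<Omega>"
proof (rule eventually_mono[OF eventually_rho_line_less[OF assms(1,2)]])
  fix h assume "\<rho> (x + h *\<^sub>R w) < \<rho> x \<and> x + h *\<^sub>R w \<in> U"
  then show "x + h *\<^sub>R w \<in> \<Omega>" using assms(3) sublevel by force
qed

lemma rho_frontier:
  assumes "x \<in> frontier \<Omega>" shows "\<rho> x = 0"
proof -
  have x: "x \<in> U" "x \<notin> \<Omega>" "x \<in> closure \<Omega>" using assms frontier_subset frontier_iff by auto
  then have "\<not> \<rho> x < 0" using sublevel by blast
  moreover have "\<not> \<rho> x > 0"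
  proof
    assume pos: "\<rho> x > 0"
    have "isCont \<rho> x" using D\<rho>[OF x(1)] by (rule has_derivative_continuous)
    then obtain d where d: "d > 0" "\<And>y. dist y x < d \<Longrightarrow> dist (\<rho> y) (\<rho> x) < \<rho> x"
      using pos unfolding continuous_at_eps_delta by blast
    obtain e where e: "e > 0" "ball x e \<subseteq> U" using open_U x(1) openE by blast
    obtain y where y: "y \<in> \<Omega>" "dist y x < min d e"
      using x(3) d e unfolding closure_approachable by (metis min_less_iff_conj)
    then have "\<rho> y < 0" using e sublevel by (auto simp: dist_commute)
    moreover have "dist (\<rho> y) (\<rho> x) < \<rho> x" using d y by simp
    ultimately show False by (simp add: dist_real_def)
  qed
  ultimately show ?thesis by simp
qed


lemma frontier_if_rho_zero:
  assumes x: "x \<in> U" and "\<rho> x = 0" and "grad x \<noteq> 0"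
  shows "x \<in> frontier \<Omega>"
proof -
  have "D\<rho> x (- grad x) < 0" using assms(3) by (simp add: grad_inner)
  then have "\<forall>\<^sub>F h in at_right 0. x + h *\<^sub>R (- grad x) \<in> \<Omega>"
    using assms by (intro eventually_line_in_domain) auto
  then have "\<forall>\<^sub>F h in at_right 0. x + h *\<^sub>R (- grad x) \<in> closure \<Omega>"
    by (rule eventually_mono) (use closure_subset in blast)
  moreover have "((\<lambda>h. x + h *\<^sub>R (- grad x)) \<longlongrightarrow> x) (at_right 0)" by (intro tendsto_eq_intros) auto
  ultimately have "x \<in> closure \<Omega>" by (intro Lim_in_closed_set[OF closed_closure]) auto
  moreover have "x \<notin> \<Omega>" using rho_neg assms by fastforce
  ultimately show ?thesis using frontier_iff by blast
qed

lemma support_open: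
  assumes q: "q \<in> frontier \<Omega>" and y: "y \<in> \<Omega>"
  shows "D\<rho> q (y - q) \<le> 0"
proof (rule ccontr)
  assume "\<not> D\<rho> q (y - q) \<le> 0"
  then have "\<forall>\<^sub>F h in at_right 0. \<rho> (q + h *\<^sub>R (y - q)) > \<rho> q \<and> q + h *\<^sub>R (y - q) \<in> U"
    using q frontier_subset by (intro eventually_rho_line_greater) auto
  moreover have "\<forall>\<^sub>F h in at_right (0::real). 0 < h \<and> h \<le> 1"
    by (auto simp: eventually_at_right_field intro!: exI[of _ 1])
  ultimately have "\<forall>\<^sub>F h in at_right 0. (\<rho> (q + h *\<^sub>R (y - q)) > \<rho> q \<and> q + h *\<^sub>R (y - q) \<in> U) \<and> 0 < h \<and> h \<le> 1"
    by (rule eventually_conj)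
  then obtain h where h: "\<rho> (q + h *\<^sub>R (y - q)) > 0" "q + h *\<^sub>R (y - q) \<in> U" "0 < h" "h \<le> 1"
    using eventually_happens'[OF trivial_limit_at_right_real] rho_frontier[OF q] by force
  have "q - h *\<^sub>R (q - y) \<in> interior \<Omega>"
    using mem_interior_closure_convex_shrink[OF convex, of y q h] y q h open_\<Omega> frontier_iff
    by (simp add: interior_open)
  then have "q + h *\<^sub>R (y - q) \<in> \<Omega>" using open_\<Omega> by (simp add: interior_open algebra_simps)
  then show False using h rho_neg by fastforce
qed

lemma support:
  assumes q: "q \<in> frontier \<Omega>" and y: "y \<in> closure \<Omega>"
  shows "D\<rho> q (y - q) \<le> 0"
proof -
  have "closed {y. D\<rho> q (y - q) \<le> 0}" by (intro closed_Collect_le continuous_intros)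
  moreover have "\<Omega> \<subseteq> {y. D\<rho> q (y - q) \<le> 0}" using support_open[OF q] by auto
  ultimately have "closure \<Omega> \<subseteq> {y. D\<rho> q (y - q) \<le> 0}" by (rule closure_minimal[rotated])
  then show ?thesis using y by auto
qed

lemma support_strict:
  assumes q: "q \<in> frontier \<Omega>" and y: "y \<in> \<Omega>"
  shows "D\<rho> q (y - q) < 0"
proof -
  have "\<forall>\<^sub>F h in at_right 0. y + h *\<^sub>R grad q \<in> \<Omega>" using open_\<Omega> y by (rule eventually_line_in_open)
  then obtain h where h: "y + h *\<^sub>R grad q \<in> \<Omega>" "h > 0"
    using eventually_happens'[OF trivial_limit_at_right_real] eventually_conj[OF _ eventually_at_right_less]
    by (metis (no_types, lifting))
  have "D\<rho> q (y - q) + h * (grad q \<bullet> grad q) = D\<rho> q (y + h *\<^sub>R grad q - q)"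
    by (simp add: grad_inner inner_add_right inner_diff_right algebra_simps)
  also have "\<dots> \<le> 0" using support_open[OF q h(1)] .
  finally show ?thesis using h(2) grad_nonzero[OF q] by (smt (verit) inner_gt_zero_iff mult_pos_pos)
qed

lemma tangent_space_frontier:
  assumes q: "q \<in> frontier \<Omega>"
  shows "tangent_space (frontier \<Omega>) q = {v. D\<rho> q v = 0}"
proof -
  have qU: "q \<in> U" using q frontier_subset by auto
  have cont: "isCont D\<rho> q" using D2\<rho>[OF qU] by (rule has_derivative_continuous)
  have "norm (D\<rho> q) > 0" using D\<rho>_nonzero[OF q] by simp
  then obtain e where e: "e > 0" "\<And>x. dist x q < e \<Longrightarrow> dist (D\<rho> x) (D\<rho> q) < norm (D\<rho> q)"
    using cont unfolding continuous_at_eps_delta by blast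
  define V where "V = U \<inter> ball q e"
  have V: "open V" "q \<in> V" using open_U qU e by (auto simp: V_def)
  have "grad x \<noteq> 0" if "x \<in> V" for x
  proof
    assume "grad x = 0"
    then have "D\<rho> x = 0" by (intro blinfun_eqI) (simp add: grad_inner)
    then show False using e(2)[of x] that by (simp add: V_def dist_norm norm_minus_commute)
  qed
  then have "frontier \<Omega> \<inter> V = {x\<in>V. \<rho> x = 0}"
    using rho_frontier frontier_if_rho_zero by (auto simp: V_def)
  moreover have "\<rho> x \<in> range (D\<rho> q)" for x
  proof
    show "\<rho> x = D\<rho> q ((\<rho> x / (grad q \<bullet> grad q)) *\<^sub>R grad q)"
      using grad_nonzero[OF q] by (simp add: grad_inner)
  qed simp
  ultimately show ?thesis
    using V q D\<rho> cont by (intro tangent_space_zero_set[OF V]) (auto simp: V_def)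
qed

lemma interior_normal_eq_nu:
  assumes q: "q \<in> frontier \<Omega>"
  shows "interior_normal \<Omega> q = nu q"
  unfolding interior_normal_def
proof (rule the_equality)
  have qU: "q \<in> U" using q frontier_subset by auto
  have T: "tangent_space (frontier \<Omega>) q = {v. grad q \<bullet> v = 0}"
    using tangent_space_frontier[OF q] by (simp add: grad_inner)
  have "D\<rho> q (nu q) < 0" using grad_nonzero[OF q] by (simp add: nu_def grad_inner)
  then have "\<forall>\<^sub>F t in at_right 0. q + t *\<^sub>R nu q \<in> \<Omega>"
    using qU rho_frontier[OF q] by (intro eventually_line_in_domain) auto
  then have "\<exists>\<epsilon>>0. \<forall>t. 0 < t \<and> t < \<epsilon> \<longrightarrow> q + t *\<^sub>R nu q \<in> \<Omega>"
    unfolding eventually_at_right_field by blast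
  then show "norm (nu q) = 1 \<and> (\<forall>v\<in>tangent_space (frontier \<Omega>) q. nu q \<bullet> v = 0) \<and>
      (\<exists>\<epsilon>>0. \<forall>t. 0 < t \<and> t < \<epsilon> \<longrightarrow> q + t *\<^sub>R nu q \<in> \<Omega>)"
    using norm_nu[OF q] T by (simp add: nu_def)
next
  fix \<nu> assume "norm \<nu> = 1 \<and> (\<forall>v\<in>tangent_space (frontier \<Omega>) q. \<nu> \<bullet> v = 0) \<and>
      (\<exists>\<epsilon>>0. \<forall>t. 0 < t \<and> t < \<epsilon> \<longrightarrow> q + t *\<^sub>R \<nu> \<in> \<Omega>)"
  then obtain \<epsilon> where \<nu>: "norm \<nu> = 1" "\<And>v. D\<rho> q v = 0 \<Longrightarrow> \<nu> \<bullet> v = 0"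
    and \<epsilon>: "\<epsilon> > 0" "\<And>t. 0 < t \<Longrightarrow> t < \<epsilon> \<Longrightarrow> q + t *\<^sub>R \<nu> \<in> \<Omega>"
    using tangent_space_frontier[OF q] by auto
  let ?g = "grad q"
  define l where "l = (\<nu> \<bullet> ?g) / (?g \<bullet> ?g)"
  have g: "?g \<noteq> 0" using grad_nonzero[OF q] .
  have w: "?g \<bullet> (\<nu> - l *\<^sub>R ?g) = 0" using g by (simp add: l_def inner_diff_right inner_commute)
  then have "\<nu> \<bullet> (\<nu> - l *\<^sub>R ?g) = 0" using \<nu>(2) by (simp add: grad_inner)
  then have "(\<nu> - l *\<^sub>R ?g) \<bullet> (\<nu> - l *\<^sub>R ?g) = 0" using w by (simp add: inner_diff_left)
  then have \<nu>_eq: "\<nu> = l *\<^sub>R ?g" by simp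
  have "D\<rho> q (q + (\<epsilon>/2) *\<^sub>R \<nu> - q) < 0" using support_strict[OF q \<epsilon>(2)] \<epsilon>(1) by simp
  then have "l < 0" using \<epsilon>(1) g inner_ge_zero[of ?g] by (auto simp: grad_inner \<nu>_eq mult_less_0_iff)
  moreover have "\<bar>l\<bar> * norm ?g = 1" using \<nu>(1) \<nu>_eq by simp
  ultimately have "l = - 1 / norm ?g" using g by (simp add: field_simps)
  then show "\<nu> = nu q" using \<nu>_eq by (simp add: nu_def)
qed


lemma hessian_bounds_near_frontier:
  assumes p: "p \<in> frontier \<Omega>"
  obtains r K L G where "r > 0" and "ball p r \<subseteq> U" and "K > 0"
    and "\<And>\<xi>. \<xi> \<in> ball p r \<Longrightarrow> norm (D2\<rho> \<xi>) \<le> L"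
    and "\<And>\<xi>. \<xi> \<in> ball p r \<Longrightarrow> norm (D\<rho> \<xi>) \<le> G"
    and "\<And>q \<xi> v. q \<in> frontier \<Omega> \<inter> ball p r \<Longrightarrow> \<xi> \<in> ball p r \<Longrightarrow> D\<rho> q v = 0 \<Longrightarrow>
      K * (norm v)\<^sup>2 \<le> D2\<rho> \<xi> v v"
proof -
  have pU: "p \<in> U" using p frontier_subset by auto
  define N where "N = norm (D\<rho> p)"
  have N: "N > 0" using D\<rho>_nonzero[OF p] by (simp add: N_def)
  define \<eta> where "\<eta> = \<kappa> * N / 8"
  have \<eta>: "\<eta> > 0" using \<kappa>_pos N by (simp add: \<eta>_def)
  obtain r0 where r0: "r0 > 0" "ball p r0 \<subseteq> U" using open_U pU openE by blast
  have "isCont D\<rho> p" using D2\<rho>[OF pU] by (rule has_derivative_continuous)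
  then obtain r1 where r1: "r1 > 0" "\<And>x. dist x p < r1 \<Longrightarrow> dist (D\<rho> x) (D\<rho> p) < N / 2"
    using N unfolding continuous_at_eps_delta by (meson half_gt_zero)
  have "isCont D2\<rho> p" using D2\<rho>_cont open_U pU by (simp add: continuous_on_eq_continuous_at)
  then obtain r2 where r2: "r2 > 0" "\<And>x. dist x p < r2 \<Longrightarrow> dist (D2\<rho> x) (D2\<rho> p) < \<eta>"
    using \<eta> unfolding continuous_at_eps_delta by blast
  define r where "r = min r0 (min r1 r2)"
  define K where "K = \<kappa> * N / 4"
  have D2_near: "norm (D2\<rho> \<xi> - D2\<rho> p) \<le> \<eta>" and D_near: "norm (D\<rho> \<xi> - D\<rho> p) \<le> N / 2"
    if "\<xi> \<in> ball p r" for \<xi>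
    using r1(2)[of \<xi>] r2(2)[of \<xi>] that by (auto simp: r_def dist_norm norm_minus_commute)
  have lower: "K * (norm v)\<^sup>2 \<le> D2\<rho> \<xi> v v"
    if q: "q \<in> frontier \<Omega> \<inter> ball p r" and \<xi>: "\<xi> \<in> ball p r" and v: "D\<rho> q v = 0" for q \<xi> v
  proof -
    have "N \<le> norm (D\<rho> q) + norm (D\<rho> q - D\<rho> p)"
      using norm_triangle_sub[of "D\<rho> p" "D\<rho> q"] by (simp add: N_def norm_minus_commute)
    then have "N / 2 \<le> norm (D\<rho> q)" using D_near[of q] q by simp
    then have "\<kappa> * (N / 2) * (norm v)\<^sup>2 \<le> \<kappa> * norm (D\<rho> q) * (norm v)\<^sup>2"
      using \<kappa>_pos by (intro mult_right_mono mult_left_mono) auto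
    also have "\<dots> \<le> D2\<rho> q v v" using hessian_convex q v by blast
    finally have "\<kappa> * (N / 2) * (norm v)\<^sup>2 \<le> D2\<rho> q v v" .
    moreover have "norm (D2\<rho> \<xi> - D2\<rho> q) \<le> 2 * \<eta>"
      using norm_triangle_ineq4[of "D2\<rho> \<xi> - D2\<rho> p" "D2\<rho> q - D2\<rho> p"] D2_near[OF \<xi>] D2_near[of q] q by auto
    ultimately have "(\<kappa> * (N / 2) - 2 * \<eta>) * (norm v)\<^sup>2 \<le> D2\<rho> \<xi> v v"
      by (rule quadratic_form_lower_bound_perturbation)
    then show ?thesis by (simp add: K_def \<eta>_def algebra_simps)
  qed
  show ?thesis
  proof (rule that[OF _ _ _ _ _ lower])
    show "r > 0" using r0 r1 r2 by (simp add: r_def)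
    show "ball p r \<subseteq> U" using r0 by (auto simp: r_def)
    show "K > 0" using \<kappa>_pos N by (simp add: K_def)
    show "norm (D2\<rho> \<xi>) \<le> norm (D2\<rho> p) + \<eta>" if "\<xi> \<in> ball p r" for \<xi>
      using norm_triangle_sub[of "D2\<rho> \<xi>" "D2\<rho> p"] D2_near[OF that] by simp
    show "norm (D\<rho> \<xi>) \<le> 3 * N / 2" if "\<xi> \<in> ball p r" for \<xi>
      using norm_triangle_sub[of "D\<rho> \<xi>" "D\<rho> p"] D_near[OF that] by (simp add: N_def)
  qed
qed


lemma nu_height_nonneg:
  assumes q: "q \<in> frontier \<Omega>" and x: "x \<in> closure \<Omega>"
  shows "(x - q) \<bullet> nu q \<ge> 0"
  using support[OF q x] grad_nonzero[OF q] by (simp add: D\<rho>_nu[OF q] zero_le_mult_iff)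

lemma frontier_taylor:
  assumes q: "q \<in> frontier \<Omega>" and x: "x \<in> frontier \<Omega>" and seg: "closed_segment q x \<subseteq> U"
  obtains \<xi> where "\<xi> \<in> closed_segment q x" and "D2\<rho> \<xi> (x - q) (x - q) = 2 * norm (grad q) * ((x - q) \<bullet> nu q)"
proof -
  obtain t where t: "0 \<le> t" "t \<le> 1"
    and taylor: "\<rho> x = \<rho> q + D\<rho> q (x - q) + 1/2 * D2\<rho> (q + t *\<^sub>R (x - q)) (x - q) (x - q)"
    using taylor_second_order[of q x \<rho> D\<rho> D2\<rho>] seg D\<rho> D2\<rho> by blast
  have "q + t *\<^sub>R (x - q) = (1 - t) *\<^sub>R q + t *\<^sub>R x" by (simp add: algebra_simps)
  then have "q + t *\<^sub>R (x - q) \<in> closed_segment q x" using t unfolding closed_segment_def by blast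
  moreover have "D2\<rho> (q + t *\<^sub>R (x - q)) (x - q) (x - q) = 2 * norm (grad q) * ((x - q) \<bullet> nu q)"
    using taylor rho_frontier[OF q] rho_frontier[OF x] by (simp add: D\<rho>_nu[OF q])
  ultimately show ?thesis by (rule that)
qed

lemma nu_height_quadratic:
  assumes p: "p \<in> frontier \<Omega>"
  obtains r c where "r > 0" and "c > 0"
    and "\<And>q x. q \<in> frontier \<Omega> \<inter> ball p r \<Longrightarrow> x \<in> frontier \<Omega> \<inter> ball p r \<Longrightarrow>
      c * (norm (x - q))\<^sup>2 \<le> (x - q) \<bullet> nu q"
proof -
  obtain r K L G where r: "r > 0" "ball p r \<subseteq> U" and K: "K > 0"
    and L: "\<And>\<xi>. \<xi> \<in> ball p r \<Longrightarrow> norm (D2\<rho> \<xi>) \<le> L"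
    and G: "\<And>\<xi>. \<xi> \<in> ball p r \<Longrightarrow> norm (D\<rho> \<xi>) \<le> G"
    and lower: "\<And>q \<xi> v. q \<in> frontier \<Omega> \<inter> ball p r \<Longrightarrow> \<xi> \<in> ball p r \<Longrightarrow> D\<rho> q v = 0 \<Longrightarrow>
      K * (norm v)\<^sup>2 \<le> D2\<rho> \<xi> v v"
    using hessian_bounds_near_frontier[OF p] by blast
  define C where "C = (2 * G + 3 * L * (2 * r)) / K + 2 * r"
  have "norm (D\<rho> p) \<le> G" "norm (D2\<rho> p) \<le> L" using G L r(1) by simp_all
  then have "0 \<le> G" "0 \<le> L" by (auto intro: order_trans[OF norm_ge_zero])
  then have C: "C > 0" using K r(1) by (simp add: C_def add_nonneg_pos)
  have "(norm (x - q))\<^sup>2 \<le> C * ((x - q) \<bullet> nu q)"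
    if q: "q \<in> frontier \<Omega> \<inter> ball p r" and x: "x \<in> frontier \<Omega> \<inter> ball p r" for q x
  proof -
    define h where "h = x - q"
    define a where "a = h \<bullet> nu q"
    define v where "v = h - a *\<^sub>R nu q"
    have \<nu>: "norm (nu q) = 1" using norm_nu q by blast
    have a: "0 \<le> a" using nu_height_nonneg q x frontier_iff by (auto simp: a_def h_def)
    have v\<nu>: "v \<bullet> nu q = 0" using \<nu> by (simp add: v_def a_def inner_diff_left dot_square_norm)
    have h_eq: "h = v + a *\<^sub>R nu q" by (simp add: v_def)
    have "norm h \<le> 2 * r"
      using q x norm_triangle_ineq4[of "x - p" "q - p"] by (auto simp: h_def dist_norm norm_minus_commute)
    have seg: "closed_segment q x \<subseteq> ball p r" using q x by (simp add: closed_segment_subset)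
    then obtain \<xi> where "\<xi> \<in> closed_segment q x" and taylor: "D2\<rho> \<xi> h h = 2 * norm (grad q) * a"
      using frontier_taylor q x r(2) unfolding h_def a_def by blast
    then have \<xi>: "\<xi> \<in> ball p r" using seg by blast
    have "2 * norm (grad q) * a \<le> 2 * G * a"
      using norm_grad_le[of q] G[of q] q a by (intro mult_right_mono) auto
    then have "D2\<rho> \<xi> (v + a *\<^sub>R nu q) (v + a *\<^sub>R nu q) \<le> 2 * G * a" using taylor by (simp add: h_eq)
    moreover have "D\<rho> q v = 0" using v\<nu> q by (simp add: D\<rho>_nu)
    ultimately have "(norm (v + a *\<^sub>R nu q))\<^sup>2 \<le> C * a"
      unfolding C_def using \<open>norm h \<le> 2 * r\<close>
      by (intro norm_sq_le_height_from_second_order[OF \<nu> v\<nu> a K L[OF \<xi>] lower[OF q \<xi>]]) (simp_all add: h_eq)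
    then show ?thesis by (simp only: flip: h_eq) (simp add: h_def a_def)
  qed
  then show ?thesis using C by (intro that[of r "1 / C"] r(1)) (auto simp: field_simps)
qed


lemma nu_height_pos:
  assumes q: "q \<in> frontier \<Omega>" and x: "x \<in> frontier \<Omega>" and "x \<noteq> q"
  shows "(x - q) \<bullet> nu q > 0"
proof (rule ccontr)
  assume "\<not> (x - q) \<bullet> nu q > 0"
  then have a0: "(x - q) \<bullet> nu q = 0" using nu_height_nonneg[OF q] x frontier_iff by force
  obtain r c where r: "r > 0" and c: "c > 0" and quadratic: "\<And>q' x'. q' \<in> frontier \<Omega> \<inter> ball q r \<Longrightarrow>
      x' \<in> frontier \<Omega> \<inter> ball q r \<Longrightarrow> c * (norm (x' - q'))\<^sup>2 \<le> (x' - q') \<bullet> nu q'"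
    using nu_height_quadratic[OF q] by blast
  define t where "t = min 1 (r / (2 * norm (x - q)))"
  have nx: "norm (x - q) > 0" using \<open>x \<noteq> q\<close> by simp
  have t: "0 < t" "t \<le> 1" using r nx by (auto simp: t_def)
  have "t * norm (x - q) \<le> r / (2 * norm (x - q)) * norm (x - q)"
    using nx by (intro mult_right_mono) (simp_all add: t_def)
  then have t_small: "t * norm (x - q) < r" using nx r by simp
  define y where "y = q + t *\<^sub>R (x - q)"
  have "y = (1 - t) *\<^sub>R q + t *\<^sub>R x" by (simp add: y_def algebra_simps)
  then have "y \<in> closure \<Omega>"
    using convex_closure[OF convex] q x t frontier_iff unfolding convex_alt by simp
  moreover have y0: "(y - q) \<bullet> nu q = 0" using a0 by (simp add: y_def)
  then have "y \<notin> \<Omega>" using support_strict[OF q] by (force simp: D\<rho>_nu[OF q])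
  ultimately have "y \<in> frontier \<Omega> \<inter> ball q r" using t t_small by (simp add: frontier_iff y_def dist_norm)
  then have "c * (norm (y - q))\<^sup>2 \<le> 0" using quadratic[of q y] q r y0 by simp
  moreover have "norm (y - q) > 0" using t nx by (simp add: y_def)
  ultimately show False using c by (simp add: mult_le_0_iff)
qed

lemma continuous_on_nu: "continuous_on (frontier \<Omega>) nu"
proof (rule continuous_at_imp_continuous_on, rule ballI)
  fix x assume x: "x \<in> frontier \<Omega>"
  have "isCont D\<rho> x" using D2\<rho> x frontier_subset by (blast intro: has_derivative_continuous)
  then have "isCont (\<lambda>x. - (1 / norm (\<Sum>b\<in>Basis. D\<rho> x b *\<^sub>R b)) *\<^sub>R (\<Sum>b\<in>Basis. D\<rho> x b *\<^sub>R b)) x"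
    using grad_nonzero[OF x] by (intro continuous_intros) (auto simp: grad_def)
  then show "isCont nu x" by (simp add: nu_def[abs_def] grad_def[abs_def])
qed

lemma nu_height_bounded_below:
  assumes "compact \<Gamma>" and "\<Gamma> \<subseteq> frontier \<Omega>" and "\<delta> > 0"
  shows "\<exists>c>0. \<forall>q\<in>\<Gamma>. \<forall>x\<in>\<Gamma>. \<delta> \<le> norm (x - q) \<longrightarrow> c \<le> (x - q) \<bullet> nu q"
proof -
  define K where "K = (\<Gamma> \<times> \<Gamma>) \<inter> {z. \<delta> \<le> norm (snd z - fst z)}"
  define f where "f z = (snd z - fst z) \<bullet> nu (fst z)" for z :: "'a \<times> 'a"
  have "compact K" unfolding K_def
    using assms(1) by (intro compact_Int_closed compact_Times closed_Collect_le continuous_intros)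
  moreover have "continuous_on K f" unfolding f_def
    by (intro continuous_intros continuous_on_compose2[OF continuous_on_nu]) (use assms(2) in \<open>auto simp: K_def\<close>)
  ultimately show ?thesis
  proof (cases "K = {}")
    case True
    then show ?thesis by (intro exI[of _ 1]) (auto simp: K_def)
  next
    case False
    assume "compact K" "continuous_on K f"
    then obtain z where z: "z \<in> K" "\<And>y. y \<in> K \<Longrightarrow> f z \<le> f y"
      using continuous_attains_inf[OF _ False] by blast
    have "f z > 0" unfolding f_def using z(1) assms(2,3) by (intro nu_height_pos) (auto simp: K_def)
    then show ?thesis using z(2) by (intro exI[of _ "f z"]) (auto simp: K_def f_def)
  qed
qed

lemma tangent_space_orthogonal_nu:
  assumes "\<Gamma> \<subseteq> frontier \<Omega>" and q: "q \<in> \<Gamma>" and v: "v \<in> tangent_space \<Gamma> q"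
  shows "nu q \<bullet> v = 0"
proof -
  have qf: "q \<in> frontier \<Omega>" using assms by auto
  have "v \<in> tangent_space (frontier \<Omega>) q" using v assms(1) unfolding tangent_space_def by blast
  then have "D\<rho> q v = 0" using tangent_space_frontier[OF qf] by simp
  then show ?thesis using grad_nonzero[OF qf] by (simp add: D\<rho>_nu[OF qf] inner_commute)
qed


lemma norm_off_axis_part_tangent_le:
  assumes \<Gamma>: "\<Gamma> \<subseteq> frontier \<Omega>" and "C2_submanifold \<Gamma> k" and q: "q \<in> \<Gamma>"
  shows "norm (off_axis_part (tangent_space \<Gamma> q) (nu q) y) \<le> norm (y - orth_proj (tangent_space \<Gamma> q) y)"
  using q \<Gamma> tangent_space_orthogonal_nu[OF \<Gamma> q]
  by (intro norm_off_axis_part_le subspace_tangent_space_C2_submanifold[OF assms(2)] norm_nu) auto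

lemma local_wedge_bound:
  assumes \<Gamma>: "\<Gamma> \<subseteq> frontier \<Omega>" and "C2_submanifold \<Gamma> k" and p: "p \<in> \<Gamma>"
  shows "\<exists>r>0. \<exists>C. \<forall>q\<in>\<Gamma> \<inter> ball p r. \<forall>x\<in>\<Gamma> \<inter> ball p r.
    norm (off_axis_part (tangent_space \<Gamma> q) (nu q) (x - q)) \<le> C * ((x - q) \<bullet> nu q)"
proof -
  obtain r1 C1 where r1: "r1 > 0" and "\<And>q. q \<in> \<Gamma> \<inter> ball p r1 \<Longrightarrow> subspace (tangent_space \<Gamma> q)"
    and deviation: "\<And>q x. q \<in> \<Gamma> \<inter> ball p r1 \<Longrightarrow> x \<in> \<Gamma> \<inter> ball p r1 \<Longrightarrow>
      norm ((x - q) - orth_proj (tangent_space \<Gamma> q) (x - q)) \<le> C1 * (norm (x - q))\<^sup>2"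
    by (rule C2_submanifold_tangent_deviation[OF assms(2) p], rule that)
  obtain r2 c where r2: "r2 > 0" and c: "c > 0" and height: "\<And>q x. q \<in> frontier \<Omega> \<inter> ball p r2 \<Longrightarrow>
      x \<in> frontier \<Omega> \<inter> ball p r2 \<Longrightarrow> c * (norm (x - q))\<^sup>2 \<le> (x - q) \<bullet> nu q"
    using nu_height_quadratic p \<Gamma> by blast
  define r where "r = min r1 r2"
  have bound: "norm (off_axis_part (tangent_space \<Gamma> q) (nu q) (x - q)) \<le> (\<bar>C1\<bar> / c) * ((x - q) \<bullet> nu q)"
    if q: "q \<in> \<Gamma> \<inter> ball p r" and x: "x \<in> \<Gamma> \<inter> ball p r" for q x
  proof -
    have q1: "q \<in> \<Gamma> \<inter> ball p r1" and x1: "x \<in> \<Gamma> \<inter> ball p r1"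
      and q2: "q \<in> frontier \<Omega> \<inter> ball p r2" and x2: "x \<in> frontier \<Omega> \<inter> ball p r2"
      using q x \<Gamma> by (auto simp: r_def)
    have "norm (off_axis_part (tangent_space \<Gamma> q) (nu q) (x - q))
        \<le> norm ((x - q) - orth_proj (tangent_space \<Gamma> q) (x - q))"
      using q by (intro norm_off_axis_part_tangent_le[OF \<Gamma> assms(2)]) simp
    also have "\<dots> \<le> C1 * (norm (x - q))\<^sup>2" by (rule deviation[OF q1 x1])
    also have "\<dots> \<le> \<bar>C1\<bar> * (norm (x - q))\<^sup>2" by (intro mult_right_mono) simp_all
    also have "\<dots> \<le> \<bar>C1\<bar> * (((x - q) \<bullet> nu q) / c)"
      using height[OF q2 x2] c by (intro mult_left_mono) (simp_all add: field_simps)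
    finally show ?thesis by simp
  qed
  moreover have "r > 0" using r1 r2 by (simp add: r_def)
  ultimately show ?thesis by blast
qed

lemma uniform_wedge_bound:
  assumes \<Gamma>: "\<Gamma> \<subseteq> frontier \<Omega>" and "compact \<Gamma>" and "C2_submanifold \<Gamma> k"
  shows "\<exists>C>0. \<forall>q\<in>\<Gamma>. \<forall>x\<in>\<Gamma>.
    norm (off_axis_part (tangent_space \<Gamma> q) (nu q) (x - q)) \<le> C * ((x - q) \<bullet> nu q)"
proof -
  have T: "subspace (tangent_space \<Gamma> q)" if "q \<in> \<Gamma>" for q
    using assms(3) that by (rule subspace_tangent_space_C2_submanifold)
  have height_nonneg: "0 \<le> (x - q) \<bullet> nu q" if "q \<in> \<Gamma>" "x \<in> \<Gamma>" for q x
    using that \<Gamma> by (intro nu_height_nonneg) (auto simp: frontier_iff)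
  obtain \<delta> C1 where \<delta>: "\<delta> > 0" and near: "\<And>q x. q \<in> \<Gamma> \<Longrightarrow> x \<in> \<Gamma> \<Longrightarrow> dist q x < \<delta> \<Longrightarrow>
      norm (off_axis_part (tangent_space \<Gamma> q) (nu q) (x - q)) \<le> C1 * ((x - q) \<bullet> nu q)"
    using compact_uniform_local_bound[OF assms(2) height_nonneg local_wedge_bound[OF \<Gamma> assms(3)]] by blast
  obtain c where c: "c > 0" and far: "\<And>q x. q \<in> \<Gamma> \<Longrightarrow> x \<in> \<Gamma> \<Longrightarrow> \<delta> \<le> norm (x - q) \<Longrightarrow>
      c \<le> (x - q) \<bullet> nu q"
    using nu_height_bounded_below[OF assms(2) \<Gamma> \<delta>] by blast
  obtain B where B: "\<And>x. x \<in> \<Gamma> \<Longrightarrow> norm x \<le> B"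
    using compact_imp_bounded[OF assms(2)] unfolding bounded_iff by blast
  define C where "C = \<bar>C1\<bar> + \<bar>2 * B / c\<bar> + 1"
  have C_ge: "C1 \<le> C" "2 * B / c \<le> C"
    unfolding C_def using abs_ge_self[of C1] abs_ge_self[of "2 * B / c"] by linarith+
  have bound: "norm (off_axis_part (tangent_space \<Gamma> q) (nu q) (x - q)) \<le> C * ((x - q) \<bullet> nu q)"
    if q: "q \<in> \<Gamma>" and x: "x \<in> \<Gamma>" for q x
  proof (cases "norm (x - q) < \<delta>")
    case True
    then have "norm (off_axis_part (tangent_space \<Gamma> q) (nu q) (x - q)) \<le> C1 * ((x - q) \<bullet> nu q)"
      using near q x by (simp add: dist_norm norm_minus_commute)
    also have "\<dots> \<le> C * ((x - q) \<bullet> nu q)"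
      using height_nonneg[OF q x] C_ge by (intro mult_right_mono) simp_all
    finally show ?thesis .
  next
    case False
    have "norm (off_axis_part (tangent_space \<Gamma> q) (nu q) (x - q))
        \<le> norm ((x - q) - orth_proj (tangent_space \<Gamma> q) (x - q))"
      by (rule norm_off_axis_part_tangent_le[OF \<Gamma> assms(3) q])
    also have "\<dots> \<le> norm (x - q)" using orth_proj_nearest[OF T[OF q] subspace_0[OF T[OF q]]] by simp
    also have "\<dots> \<le> 2 * B" using B[OF q] B[OF x] norm_triangle_ineq4[of x q] by simp
    also have "\<dots> = (2 * B / c) * c" using c by simp
    also have "\<dots> \<le> (2 * B / c) * ((x - q) \<bullet> nu q)"
    proof (rule mult_left_mono)
      show "c \<le> (x - q) \<bullet> nu q" using far[OF q x] False by simp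
      have "0 \<le> B" using B[OF x] norm_ge_zero[of x] by linarith
      then show "0 \<le> 2 * B / c" using c by simp
    qed
    also have "\<dots> \<le> C * ((x - q) \<bullet> nu q)"
      using height_nonneg[OF q x] C_ge by (intro mult_right_mono) simp_all
    finally show ?thesis .
  qed
  moreover have "C > 0" by (simp add: C_def add_nonneg_pos)
  ultimately show ?thesis by blast
qed

end


lemma uniformly_convex_boundary_if_C2_uniformly_convex_domain:
  assumes "open \<Omega>" and "C2_uniformly_convex_domain \<Omega>"
  shows "\<exists>U \<rho> D\<rho> D2\<rho> \<kappa>. uniformly_convex_boundary \<Omega> U \<rho> D\<rho> D2\<rho> \<kappa>"
proof -
  obtain U \<rho> D\<rho> D2\<rho> \<kappa> where "open U" "frontier \<Omega> \<subseteq> U"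
    "\<forall>x\<in>U. (\<rho> has_derivative blinfun_apply (D\<rho> x)) (at x)"
    "\<forall>x\<in>U. (D\<rho> has_derivative blinfun_apply (D2\<rho> x)) (at x)" "continuous_on U D2\<rho>"
    "\<Omega> \<inter> U = {x\<in>U. \<rho> x < 0}" "\<forall>x\<in>frontier \<Omega>. D\<rho> x \<noteq> 0" "\<kappa> > 0"
    "\<forall>x\<in>frontier \<Omega>. \<forall>v. D\<rho> x v = 0 \<longrightarrow> D2\<rho> x v v \<ge> \<kappa> * norm (D\<rho> x) * (norm v)\<^sup>2"
    using assms(2) unfolding C2_uniformly_convex_domain_def by blast
  then have "uniformly_convex_boundary \<Omega> U \<rho> D\<rho> D2\<rho> \<kappa>"
    using assms unfolding C2_uniformly_convex_domain_def by unfold_locales auto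
  then show ?thesis by blast
qed


theorem lemma3p3:
  fixes \<Omega> \<Gamma> :: "'a::euclidean_space set" and m n :: nat
  assumes "DIM('a) = m + n" and "m \<ge> 1"
    and "bounded \<Omega>" and "open \<Omega>" and "C2_uniformly_convex_domain \<Omega>"
    and "\<Gamma> \<subseteq> frontier \<Omega>" and "compact \<Gamma>" and "C2_submanifold \<Gamma> (m - 1)"
  shows "\<exists>\<theta>. 0 < \<theta> \<and> \<theta> < pi / 2 \<and>
    convex hull \<Gamma> \<subseteq> (\<Inter>q\<in>\<Gamma>. (\<lambda>y. q + y) ` wedge (tangent_space \<Gamma> q) (interior_normal \<Omega> q) \<theta>)"
proof -
  obtain U \<rho> D\<rho> D2\<rho> \<kappa> where "uniformly_convex_boundary \<Omega> U \<rho> D\<rho> D2\<rho> \<kappa>"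
    using uniformly_convex_boundary_if_C2_uniformly_convex_domain[OF assms(4,5)] by blast
  then interpret uniformly_convex_boundary \<Omega> U \<rho> D\<rho> D2\<rho> \<kappa> .
  obtain C where C: "C > 0" and bound: "\<forall>q\<in>\<Gamma>. \<forall>x\<in>\<Gamma>.
      norm (off_axis_part (tangent_space \<Gamma> q) (nu q) (x - q)) \<le> C * ((x - q) \<bullet> nu q)"
    using uniform_wedge_bound[OF assms(6-8)] by blast
  have "convex hull \<Gamma> \<subseteq> (\<lambda>y. q + y) ` wedge (tangent_space \<Gamma> q) (interior_normal \<Omega> q) (arctan C)"
    if q: "q \<in> \<Gamma>" for q
  proof (rule convex_hull_subset_translated_wedge)
    show "subspace (tangent_space \<Gamma> q)" using assms(8) q by (rule subspace_tangent_space_C2_submanifold)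
    have "interior_normal \<Omega> q = nu q" using assms(6) q by (intro interior_normal_eq_nu) auto
    then show "x - q \<in> wedge (tangent_space \<Gamma> q) (interior_normal \<Omega> q) (arctan C)" if "x \<in> \<Gamma>" for x
      using bound q that by (simp add: mem_wedge_iff tan_arctan)
  qed
  moreover have "0 < arctan C" "arctan C < pi / 2" using C arctan_ubound by (simp_all add: arctan_less_zero_iff)
  ultimately show ?thesis by blast
qed

end
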